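(* Let $G$ be a finite group and $M\cong\mathbb{Z}^d$ a $G$-module with faithful $G$-action, with $G$ identified with its image in $\mathrm{Aut}(M)\subseteq\mathrm{Aut}(\widehat M)$. Let $q\ge3$ be an integer such that the exponent of $H^2(G,M)$ divides $q$. Then there is a natural exact sequence \[H^1(G,\widehat M)\to H^1(G,M/qM)\to H^2(G,\widehat M)\to 0,\] compatible with the natural actions of $\mathcal{N}_{\mathrm{Aut}(\widehat M)}(G)$, and consequently every element of $\mathcal{N}_{\mathrm{Aut}(\widehat M)}(G)\cap\ker\big(\mathrm{Aut}(\widehat M)\to\mathrm{Aut}(M/qM)\big)$ acts trivially on $H^2(G,\widehat M)$.
   Context: $\widehat M$ is the profinite completion of $M$ with induced $G$-action; $\mathcal{N}_H(K)$ denotes the normalizer. For $N$ equal to $\widehat M$ or $M/qM$, an element $\phi\in\mathcal{N}_{\mathrm{Aut}(\widehat M)}(G)$ acts on an $n$-cocycle $\zeta\colon G^n\to N$ by $(\phi\cdot\zeta)(g_1,\dots,g_n)=\phi(\zeta(\phi^{-1}g_1\phi,\dots,\phi^{-1}g_n\phi))$, where $\phi$ acts on $M/qM$ through the reduction $\mathrm{Aut}(\widehat M)\to\mathrm{Aut}(M/qM)$; this induces actions on cohomology. *)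

theory Defs
  imports "HOL-Analysis.Analysis"
begin

text \<open>The finite group G is identified with its (faithful) image in
Aut(M) = GL_d(Z): G is a finite set of d x d integer matrices forming a group under
matrix multiplication, and M = Z^d = int^'d with g acting by g *v v.
M/qM is represented by the vectors with all coordinates reduced into [0,q).
The profinite completion Mhat = lim M/nM is represented by compatible families
x n (n > 0) of canonically reduced vectors, x 0 = 0.
Group cohomology of the finite group G uses inhomogeneous cochains.\<close>

record ('a, 'g) gmodule =
  mcar :: "'a set"
  madd :: "'a \<Rightarrow> 'a \<Rightarrow> 'a"
  mneg :: "'a \<Rightarrow> 'a"
  mact :: "'g \<Rightarrow> 'a \<Rightarrow> 'a"

definition msub :: "('a, 'g, 'z) gmodule_scheme \<Rightarrow> 'a \<Rightarrow> 'a \<Rightarrow> 'a" where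
  "msub A x y = madd A x (mneg A y)"

definition vmod :: "int^'d \<Rightarrow> int \<Rightarrow> int^'d" where
  "vmod v n = (\<chi> i. v $ i mod n)"

definition Mint :: "(int^'d, int^'d^'d) gmodule" where
  "Mint = \<lparr>mcar = UNIV, madd = (+), mneg = uminus, mact = (\<lambda>g v. g *v v)\<rparr>"

definition Mq :: "nat \<Rightarrow> (int^'d, int^'d^'d) gmodule" where
  "Mq q = \<lparr>mcar = {v. vmod v (int q) = v},
           madd = (\<lambda>v w. vmod (v + w) (int q)),
           mneg = (\<lambda>v. vmod (- v) (int q)),
           mact = (\<lambda>g v. vmod (g *v v) (int q))\<rparr>"

definition Mhat_car :: "(nat \<Rightarrow> int^'d) set" where
  "Mhat_car = {x. x 0 = 0 \<and> (\<forall>n>0. vmod (x n) (int n) = x n)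
                \<and> (\<forall>m n. 0 < m \<longrightarrow> 0 < n \<longrightarrow> m dvd n \<longrightarrow> vmod (x n) (int m) = x m)}"

definition hadd :: "(nat \<Rightarrow> int^'d) \<Rightarrow> (nat \<Rightarrow> int^'d) \<Rightarrow> (nat \<Rightarrow> int^'d)" where
  "hadd x y = (\<lambda>n. if n = 0 then 0 else vmod (x n + y n) (int n))"

definition hneg :: "(nat \<Rightarrow> int^'d) \<Rightarrow> (nat \<Rightarrow> int^'d)" where
  "hneg x = (\<lambda>n. if n = 0 then 0 else vmod (- x n) (int n))"

definition hact :: "int^'d^'d \<Rightarrow> (nat \<Rightarrow> int^'d) \<Rightarrow> (nat \<Rightarrow> int^'d)" where
  "hact g x = (\<lambda>n. if n = 0 then 0 else vmod (g *v x n) (int n))"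

definition hscal :: "nat \<Rightarrow> (nat \<Rightarrow> int^'d) \<Rightarrow> (nat \<Rightarrow> int^'d)" where
  "hscal q x = (\<lambda>n. if n = 0 then 0 else vmod (int q *s x n) (int n))"

definition Mhat :: "(nat \<Rightarrow> int^'d, int^'d^'d) gmodule" where
  "Mhat = \<lparr>mcar = Mhat_car, madd = hadd, mneg = hneg, mact = hact\<rparr>"

text \<open>Canonical lift M -> Mhat (used to lift elements of M/qM) and
division by q in Mhat (multiplication by q is injective on Mhat).\<close>

definition hiota :: "int^'d \<Rightarrow> (nat \<Rightarrow> int^'d)" where
  "hiota v = (\<lambda>n. if n = 0 then 0 else vmod v (int n))"

definition hdiv :: "nat \<Rightarrow> (nat \<Rightarrow> int^'d) \<Rightarrow> (nat \<Rightarrow> int^'d)" where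
  "hdiv q y = (THE x. x \<in> Mhat_car \<and> hscal q x = y)"

definition d1 :: "('a, int^'d^'d, 'z) gmodule_scheme \<Rightarrow> (int^'d^'d \<Rightarrow> 'a)
                   \<Rightarrow> int^'d^'d \<Rightarrow> int^'d^'d \<Rightarrow> 'a" where
  "d1 A c g h = madd A (msub A (mact A g (c h)) (c (g ** h))) (c g)"

definition cocycle1 :: "(int^'d^'d) set \<Rightarrow> ('a, int^'d^'d, 'z) gmodule_scheme
                        \<Rightarrow> (int^'d^'d \<Rightarrow> 'a) \<Rightarrow> bool" where
  "cocycle1 G A f \<longleftrightarrow> (\<forall>g\<in>G. f g \<in> mcar A)
     \<and> (\<forall>g\<in>G. \<forall>h\<in>G. f (g ** h) = madd A (f g) (mact A g (f h)))"

definition coboundary1 :: "(int^'d^'d) set \<Rightarrow> ('a, int^'d^'d, 'z) gmodule_scheme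
                        \<Rightarrow> (int^'d^'d \<Rightarrow> 'a) \<Rightarrow> bool" where
  "coboundary1 G A f \<longleftrightarrow> (\<exists>a\<in>mcar A. \<forall>g\<in>G. f g = msub A (mact A g a) a)"

definition cohomologous1 :: "(int^'d^'d) set \<Rightarrow> ('a, int^'d^'d, 'z) gmodule_scheme
                        \<Rightarrow> (int^'d^'d \<Rightarrow> 'a) \<Rightarrow> (int^'d^'d \<Rightarrow> 'a) \<Rightarrow> bool" where
  "cohomologous1 G A f f' \<longleftrightarrow> coboundary1 G A (\<lambda>g. msub A (f g) (f' g))"

definition cocycle2 :: "(int^'d^'d) set \<Rightarrow> ('a, int^'d^'d, 'z) gmodule_scheme
                        \<Rightarrow> (int^'d^'d \<Rightarrow> int^'d^'d \<Rightarrow> 'a) \<Rightarrow> bool" where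
  "cocycle2 G A f \<longleftrightarrow> (\<forall>g\<in>G. \<forall>h\<in>G. f g h \<in> mcar A)
     \<and> (\<forall>g\<in>G. \<forall>h\<in>G. \<forall>k\<in>G.
          madd A (mact A g (f h k)) (f g (h ** k)) = madd A (f (g ** h) k) (f g h))"

definition coboundary2 :: "(int^'d^'d) set \<Rightarrow> ('a, int^'d^'d, 'z) gmodule_scheme
                        \<Rightarrow> (int^'d^'d \<Rightarrow> int^'d^'d \<Rightarrow> 'a) \<Rightarrow> bool" where
  "coboundary2 G A f \<longleftrightarrow> (\<exists>c. (\<forall>g\<in>G. c g \<in> mcar A) \<and> (\<forall>g\<in>G. \<forall>h\<in>G. f g h = d1 A c g h))"

definition cohomologous2 :: "(int^'d^'d) set \<Rightarrow> ('a, int^'d^'d, 'z) gmodule_scheme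
       \<Rightarrow> (int^'d^'d \<Rightarrow> int^'d^'d \<Rightarrow> 'a) \<Rightarrow> (int^'d^'d \<Rightarrow> int^'d^'d \<Rightarrow> 'a) \<Rightarrow> bool" where
  "cohomologous2 G A f f' \<longleftrightarrow> coboundary2 G A (\<lambda>g h. msub A (f g h) (f' g h))"

definition redq :: "nat \<Rightarrow> (int^'d^'d \<Rightarrow> nat \<Rightarrow> int^'d) \<Rightarrow> (int^'d^'d \<Rightarrow> int^'d)" where
  "redq q f = (\<lambda>g. f g q)"

text \<open>Connecting map H^1(G,M/qM) -> H^2(G,Mhat) of 0 -> Mhat --q--> Mhat -> M/qM -> 0:
lift, take the coboundary, divide by q.\<close>
definition beta :: "nat \<Rightarrow> (int^'d^'d \<Rightarrow> int^'d) \<Rightarrow> (int^'d^'d \<Rightarrow> int^'d^'d \<Rightarrow> nat \<Rightarrow> int^'d)" where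
  "beta q z = (\<lambda>g h. hdiv q (d1 Mhat (\<lambda>k. hiota (z k)) g h))"

definition hcont :: "((nat \<Rightarrow> int^'d) \<Rightarrow> (nat \<Rightarrow> int^'d)) \<Rightarrow> bool" where
  "hcont \<phi> \<longleftrightarrow> (\<forall>n>0. \<exists>m>0. \<forall>x\<in>Mhat_car. \<forall>y\<in>Mhat_car. x m = y m \<longrightarrow> \<phi> x n = \<phi> y n)"

text \<open>Automorphisms of the profinite group Mhat (topological group automorphisms).\<close>
definition AutMhat :: "((nat \<Rightarrow> int^'d) \<Rightarrow> (nat \<Rightarrow> int^'d)) set" where
  "AutMhat = {\<phi>. bij_betw \<phi> Mhat_car Mhat_car
      \<and> (\<forall>x\<in>Mhat_car. \<forall>y\<in>Mhat_car. \<phi> (hadd x y) = hadd (\<phi> x) (\<phi> y))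
      \<and> hcont \<phi> \<and> hcont (inv_into Mhat_car \<phi>)}"

text \<open>Normalizer of G (acting via hact) in Aut(Mhat):  phi^-1 G phi = G.\<close>
definition NAut :: "(int^'d^'d) set \<Rightarrow> ((nat \<Rightarrow> int^'d) \<Rightarrow> (nat \<Rightarrow> int^'d)) set" where
  "NAut G = {\<phi> \<in> AutMhat.
      (\<forall>g\<in>G. \<exists>g'\<in>G. \<forall>x\<in>Mhat_car. \<phi> (hact g' x) = hact g (\<phi> x))
    \<and> (\<forall>g'\<in>G. \<exists>g\<in>G. \<forall>x\<in>Mhat_car. \<phi> (hact g' x) = hact g (\<phi> x))}"

text \<open>conjG G phi g = phi^-1 g phi (an element of G for phi in the normalizer).\<close>
definition conjG :: "(int^'d^'d) set \<Rightarrow> ((nat \<Rightarrow> int^'d) \<Rightarrow> (nat \<Rightarrow> int^'d)) \<Rightarrow> int^'d^'d \<Rightarrow> int^'d^'d" where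
  "conjG G \<phi> g = (THE g'. g' \<in> G \<and> (\<forall>x\<in>Mhat_car. \<phi> (hact g' x) = hact g (\<phi> x)))"

definition phiq :: "nat \<Rightarrow> ((nat \<Rightarrow> int^'d) \<Rightarrow> (nat \<Rightarrow> int^'d)) \<Rightarrow> int^'d \<Rightarrow> int^'d" where
  "phiq q \<phi> v = \<phi> (hiota v) q"

definition act1hat where
  "act1hat G \<phi> f = (\<lambda>g. \<phi> (f (conjG G \<phi> g)))"

definition act2hat where
  "act2hat G \<phi> f = (\<lambda>g h. \<phi> (f (conjG G \<phi> g) (conjG G \<phi> h)))"

definition act1q where
  "act1q q G \<phi> f = (\<lambda>g. phiq q \<phi> (f (conjG G \<phi> g)))"

end

theory Submission
  imports Defs "HOL-Computational_Algebra.Primes"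
begin

text \<open>Multiplication by \<open>q\<close> on \<open>Mhat\<close> is injective with cokernel \<open>M/qM\<close>, so the short exact
sequence \<open>0 \<rightarrow> Mhat \<rightarrow> Mhat \<rightarrow> M/qM \<rightarrow> 0\<close> gives the sequence in cohomology; the connecting map
\<open>beta\<close> lifts a cocycle to \<open>Mhat\<close>, takes its coboundary and divides by \<open>q\<close>.  It is onto
\<open>H\<^sup>2(G,Mhat)\<close> because \<open>q\<close> kills \<open>H\<^sup>2(G,Mhat)\<close>: averaging over \<open>G\<close> shows that every
\<open>Mhat\<close>-valued 2-cocycle is cohomologous to an integral one, and \<open>q\<close> kills \<open>H\<^sup>2(G,M)\<close> by hypothesis.
If \<open>\<phi>\<close> normalizes \<open>G\<close> and is trivial modulo \<open>q\<close>, then for \<open>g \<in> G\<close> the element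
\<open>g\<^sup>-\<^sup>1 \<phi>\<^sup>-\<^sup>1 g \<phi>\<close> of \<open>G\<close> has finite order and is congruent to \<open>1\<close> modulo \<open>q \<ge> 3\<close>, hence is trivial
by Minkowski's lemma.  So \<open>\<phi>\<close> commutes with \<open>G\<close>, and as every class is \<open>beta z\<close> and \<open>\<phi>\<close> fixes
\<open>z\<close> modulo \<open>q\<close>, \<open>\<phi>\<close> fixes every class.\<close>

section \<open>Reduction of integer vectors\<close>

lemma vmod_nth[simp]: "vmod u n $ i = u $ i mod n"
  by (simp add: vmod_def)

lemma vmod_vmod[simp]: "vmod (vmod u n) n = vmod u n"
  by (simp add: vec_eq_iff)
lemma vmod_add_l[simp]: "vmod (vmod u n + v) n = vmod (u + v) n"
  by (simp add: vec_eq_iff mod_add_left_eq)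
lemma vmod_add_r[simp]: "vmod (u + vmod v n) n = vmod (u + v) n"
  by (simp add: vec_eq_iff mod_add_right_eq)
lemma vmod_diff_l[simp]: "vmod (vmod u n - v) n = vmod (u - v) n"
  by (simp add: vec_eq_iff mod_diff_left_eq)
lemma vmod_diff_r[simp]: "vmod (u - vmod v n) n = vmod (u - v) n"
  by (simp add: vec_eq_iff mod_diff_right_eq)
lemma vmod_neg[simp]: "vmod (- vmod u n) n = vmod (- u) n"
  by (simp add: vec_eq_iff mod_minus_eq)
lemma vmod_smult[simp]: "vmod (k *s vmod u n) n = vmod (k *s u) n"
  by (simp add: vec_eq_iff mod_mult_right_eq)
lemma vmod_zero[simp]: "vmod 0 n = 0"
  by (simp add: vec_eq_iff)

lemma vmod_matrix_vector_mult[simp]: "vmod (A *v vmod u n) n = vmod (A *v u) n"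
proof -
  have "(\<Sum>j\<in>UNIV. A $ i $ j * (u $ j mod n)) mod n = (\<Sum>j\<in>UNIV. A $ i $ j * u $ j) mod n" for i
  proof -
    have "(\<Sum>j\<in>UNIV. A $ i $ j * (u $ j mod n)) mod n = (\<Sum>j\<in>UNIV. (A $ i $ j * (u $ j mod n)) mod n) mod n"
      by (simp add: mod_sum_eq)
    also have "\<dots> = (\<Sum>j\<in>UNIV. (A $ i $ j * u $ j) mod n) mod n"
      by (simp add: mod_mult_right_eq)
    also have "\<dots> = (\<Sum>j\<in>UNIV. A $ i $ j * u $ j) mod n" by (simp add: mod_sum_eq)
    finally show ?thesis .
  qed
  then show ?thesis by (simp add: vec_eq_iff matrix_vector_mult_def)
qed

lemma vmod_dvd: "m dvd n \<Longrightarrow> vmod (vmod u n) m = vmod u m"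
  by (simp add: vec_eq_iff mod_mod_cancel)

lemma vmod_eq_iff: "vmod u n = vmod v n \<longleftrightarrow> vmod (u - v) n = 0"
  by (simp add: vec_eq_iff mod_eq_dvd_iff dvd_eq_mod_eq_0)

lemma matrix_vector_mult_neg: "(A::int^'n^'m) *v (- x) = - (A *v x)"
  by (simp add: vec_eq_iff matrix_vector_mult_def sum_negf)
lemma matrix_vector_mult_smult: "(A::int^'n^'m) *v (k *s x) = k *s (A *v x)"
  by (simp add: vec_eq_iff matrix_vector_mult_def sum_distrib_left mult_ac)

lemma vector_smult_cancel: "(k::int) \<noteq> 0 \<Longrightarrow> k *s u = k *s v \<Longrightarrow> u = v"
  by (simp add: vec_eq_iff)

lemma matrix_vector_mult_axis: "((A::int^'n^'m) *v axis j 1) $ i = A $ i $ j"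
  by (simp add: matrix_vector_mult_def axis_def if_distrib cong: if_cong)

lemma matrix_eq_if_vmod_eq:
  fixes A B :: "int^'n^'m"
  assumes "\<forall>v. \<forall>n>0. vmod (A *v v) (int n) = vmod (B *v v) (int n)"
  shows "A = B"
proof -
  have "(A *v v) $ i = (B *v v) $ i" for v i
  proof -
    define a where "a = (A *v v) $ i"
    define b where "b = (B *v v) $ i"
    define n where "n = nat \<bar>a - b\<bar> + 1"
    have "0 < n" by (simp add: n_def)
    then have "vmod (A *v v) (int n) = vmod (B *v v) (int n)" using assms by blast
    then have "int n dvd a - b" by (simp add: a_def b_def vec_eq_iff mod_eq_dvd_iff)
    moreover have "\<bar>a - b\<bar> < int n" by (simp add: n_def)
    ultimately have "a = b" by (metis dvd_imp_le_int abs_of_nat linorder_not_le eq_iff_diff_eq_0)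
    then show ?thesis by (simp add: a_def b_def)
  qed
  then have "A $ i $ j = B $ i $ j" for i j using matrix_vector_mult_axis by metis
  then show ?thesis by (simp add: vec_eq_iff)
qed

section \<open>The profinite completion as an abelian group\<close>

lemma Mhat_carI:
  assumes "x 0 = 0" "\<And>n. n>0 \<Longrightarrow> vmod (x n) (int n) = x n"
    "\<And>m n. 0<m \<Longrightarrow> 0<n \<Longrightarrow> m dvd n \<Longrightarrow> vmod (x n) (int m) = x m"
  shows "x \<in> Mhat_car"
  using assms unfolding Mhat_car_def by blast

lemma Mhat_car_red: "x \<in> Mhat_car \<Longrightarrow> 0<n \<Longrightarrow> vmod (x n) (int n) = x n"
  unfolding Mhat_car_def by blast
lemma Mhat_car_compat: "x \<in> Mhat_car \<Longrightarrow> 0<m \<Longrightarrow> 0<n \<Longrightarrow> m dvd n \<Longrightarrow> vmod (x n) (int m) = x m"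
  unfolding Mhat_car_def by blast
lemma Mhat_car_0: "x \<in> Mhat_car \<Longrightarrow> x 0 = 0"
  unfolding Mhat_car_def by blast

lemma Mhat_car_eqI: assumes "x \<in> Mhat_car" "y \<in> Mhat_car" "\<And>n. n>0 \<Longrightarrow> x n = y n" shows "x = y"
proof (rule ext)
  fix n show "x n = y n" using assms by (cases "n=0") (auto simp: Mhat_car_0)
qed

lemma Mhat_car_reduceI:
  assumes cong: "\<And>m n. 0<m \<Longrightarrow> 0<n \<Longrightarrow> m dvd n \<Longrightarrow> vmod (F n) (int m) = vmod (F m) (int m)"
  shows "(\<lambda>n. if n = 0 then 0 else vmod (F n) (int n)) \<in> Mhat_car"
proof (rule Mhat_carI)
  fix m n :: nat assume "0<m" "0<n" "m dvd n"
  then have "int m dvd int n" by simp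
  then show "vmod ((\<lambda>n. if n = 0 then 0 else vmod (F n) (int n)) n) (int m) =
     (\<lambda>n. if n = 0 then 0 else vmod (F n) (int n)) m"
    using \<open>0<m\<close> \<open>0<n\<close> cong[OF \<open>0<m\<close> \<open>0<n\<close> \<open>m dvd n\<close>] by (simp add: vmod_dvd)
qed simp_all
lemma hadd_in: assumes "x \<in> Mhat_car" "y \<in> Mhat_car" shows "hadd x y \<in> Mhat_car"
  unfolding hadd_def
proof (rule Mhat_car_reduceI)
  fix m n :: nat assume h: "0<m" "0<n" "m dvd n"
  have "vmod (x n + y n) (int m) = vmod (vmod (x n) (int m) + vmod (y n) (int m)) (int m)" by simp
  also have "\<dots> = vmod (x m + y m) (int m)" using assms h by (simp add: Mhat_car_compat)
  finally show "vmod (x n + y n) (int m) = vmod (x m + y m) (int m)" .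
qed

lemma hneg_in: assumes "x \<in> Mhat_car" shows "hneg x \<in> Mhat_car"
  unfolding hneg_def
proof (rule Mhat_car_reduceI)
  fix m n :: nat assume h: "0<m" "0<n" "m dvd n"
  have "vmod (- x n) (int m) = vmod (- vmod (x n) (int m)) (int m)" by simp
  also have "\<dots> = vmod (- x m) (int m)" using assms h by (simp add: Mhat_car_compat)
  finally show "vmod (- x n) (int m) = vmod (- x m) (int m)" .
qed

lemma hact_in: assumes "x \<in> Mhat_car" shows "hact g x \<in> Mhat_car"
  unfolding hact_def
proof (rule Mhat_car_reduceI)
  fix m n :: nat assume h: "0<m" "0<n" "m dvd n"
  have "vmod (g *v x n) (int m) = vmod (g *v vmod (x n) (int m)) (int m)" by simp
  also have "\<dots> = vmod (g *v x m) (int m)" using assms h by (simp add: Mhat_car_compat)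
  finally show "vmod (g *v x n) (int m) = vmod (g *v x m) (int m)" .
qed

lemma hscal_in: assumes "x \<in> Mhat_car" shows "hscal k x \<in> Mhat_car"
  unfolding hscal_def
proof (rule Mhat_car_reduceI)
  fix m n :: nat assume h: "0<m" "0<n" "m dvd n"
  have "vmod (int k *s x n) (int m) = vmod (int k *s vmod (x n) (int m)) (int m)" by simp
  also have "\<dots> = vmod (int k *s x m) (int m)" using assms h by (simp add: Mhat_car_compat)
  finally show "vmod (int k *s x n) (int m) = vmod (int k *s x m) (int m)" .
qed

lemma hiota_in: "hiota v \<in> Mhat_car"
  unfolding hiota_def by (rule Mhat_car_reduceI) (simp add: vmod_dvd)

lemma hzero_in: "(\<lambda>n. 0) \<in> Mhat_car"
  unfolding Mhat_car_def by simp

lemma hadd_at[simp]: "0<n \<Longrightarrow> hadd x y n = vmod (x n + y n) (int n)" by (simp add: hadd_def)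
lemma hneg_at[simp]: "0<n \<Longrightarrow> hneg x n = vmod (- x n) (int n)" by (simp add: hneg_def)
lemma hact_at[simp]: "0<n \<Longrightarrow> hact g x n = vmod (g *v x n) (int n)" by (simp add: hact_def)
lemma hscal_at[simp]: "0<n \<Longrightarrow> hscal k x n = vmod (int k *s x n) (int n)" by (simp add: hscal_def)
lemma hiota_at[simp]: "0<n \<Longrightarrow> hiota v n = vmod v (int n)" by (simp add: hiota_def)

text \<open>Working in a type turns the levelwise operations into an \<open>ab_group_add\<close> instance,
so that \<open>algebra_simps\<close> applies.\<close>

typedef ('d::finite) mhat = "Mhat_car :: (nat \<Rightarrow> int^'d) set"
  using hzero_in by blast

setup_lifting type_definition_mhat

instantiation mhat :: (finite) ab_group_add
begin
lift_definition zero_mhat :: "'a mhat" is "\<lambda>n. 0" by (rule hzero_in)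
lift_definition plus_mhat :: "'a mhat \<Rightarrow> 'a mhat \<Rightarrow> 'a mhat" is hadd by (rule hadd_in)
lift_definition uminus_mhat :: "'a mhat \<Rightarrow> 'a mhat" is hneg by (rule hneg_in)
definition minus_mhat :: "'a mhat \<Rightarrow> 'a mhat \<Rightarrow> 'a mhat" where "minus_mhat x y = x + - y"
instance
proof
  fix a b c :: "'a mhat"
  show "a + b + c = a + (b + c)"
    by transfer (rule Mhat_car_eqI, auto intro!: hadd_in simp: add.assoc)
  show "a + b = b + a"
    by transfer (rule Mhat_car_eqI, auto intro!: hadd_in simp: add.commute)
  show "0 + a = a"
    by transfer (rule Mhat_car_eqI, auto intro!: hadd_in hzero_in simp: Mhat_car_red)
  show "- a + a = 0"
    by transfer (rule Mhat_car_eqI, auto intro!: hadd_in hneg_in hzero_in)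
  show "a - b = a + - b" by (simp add: minus_mhat_def)
qed
end

lift_definition gact :: "int^'d^'d \<Rightarrow> ('d::finite) mhat \<Rightarrow> 'd mhat" is hact by (rule hact_in)
lift_definition nscale :: "nat \<Rightarrow> ('d::finite) mhat \<Rightarrow> 'd mhat" is hscal by (rule hscal_in)
lift_definition iota :: "int^'d \<Rightarrow> ('d::finite) mhat" is hiota by (rule hiota_in)
lift_definition level :: "nat \<Rightarrow> ('d::finite) mhat \<Rightarrow> int^'d" is "\<lambda>n x. x n" .

lemma mhat_eq_iff: "(x::'d::finite mhat) = y \<longleftrightarrow> (\<forall>n>0. level n x = level n y)"
  by transfer (auto intro: Mhat_car_eqI)

lemma level_red[simp]: "0<n \<Longrightarrow> vmod (level n x) (int n) = level n x"
  by transfer (rule Mhat_car_red)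
lemma level_add[simp]: "0<n \<Longrightarrow> level n (x + y) = vmod (level n x + level n y) (int n)"
  by transfer simp
lemma level_minus[simp]: "0<n \<Longrightarrow> level n (- x) = vmod (- level n x) (int n)"
  by transfer simp
lemma level_diff[simp]: "0<n \<Longrightarrow> level n (x - y) = vmod (level n x - level n y) (int n)"
proof -
  assume n: "0<n"
  show ?thesis
    by (simp only: diff_conv_add_uminus[of x y] level_add[OF n] level_minus[OF n] vmod_add_r
       diff_conv_add_uminus[of "level n x" "level n y"])
qed
lemma level_zero[simp]: "level n 0 = 0"
  by transfer simp
lemma level_gact[simp]: "0<n \<Longrightarrow> level n (gact g x) = vmod (g *v level n x) (int n)"
  by transfer simp
lemma level_nscale[simp]: "0<n \<Longrightarrow> level n (nscale k x) = vmod (int k *s level n x) (int n)"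
  by transfer simp
lemma level_iota[simp]: "0<n \<Longrightarrow> level n (iota v) = vmod v (int n)"
  by transfer simp
lemma level_compat: "0<m \<Longrightarrow> 0<n \<Longrightarrow> m dvd n \<Longrightarrow> vmod (level n x) (int m) = level m x"
  by transfer (rule Mhat_car_compat)

lemma gact_add[simp]: "gact g (x + y) = gact g x + gact g y"
  by (simp add: mhat_eq_iff algebra_simps)
lemma gact_minus[simp]: "gact g (- x) = - gact g x"
  by (simp add: mhat_eq_iff matrix_vector_mult_neg)
lemma gact_diff[simp]: "gact g (x - y) = gact g x - gact g y"
  by (simp only: diff_conv_add_uminus gact_add gact_minus)
lemma gact_zero[simp]: "gact g 0 = 0"
  by (simp add: mhat_eq_iff)
lemma gact_gact[simp]: "gact g (gact h x) = gact (g ** h) x"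
  by (simp add: mhat_eq_iff matrix_vector_mul_assoc)
lemma nscale_add[simp]: "nscale k (x + y) = nscale k x + nscale k y"
  by (simp add: mhat_eq_iff vector_add_ldistrib)
lemma nscale_minus[simp]: "nscale k (- x) = - nscale k x"
  by (simp add: mhat_eq_iff vector_smult_rneg)
lemma nscale_diff[simp]: "nscale k (x - y) = nscale k x - nscale k y"
  by (simp only: diff_conv_add_uminus nscale_add nscale_minus)
lemma nscale_zero[simp]: "nscale k 0 = 0"
  by (simp add: mhat_eq_iff)
lemma nscale_gact[simp]: "nscale k (gact g x) = gact g (nscale k x)"
  by (simp add: mhat_eq_iff matrix_vector_mult_smult)
lemma nscale_0[simp]: "nscale 0 x = 0"
  by (simp add: mhat_eq_iff)
lemma nscale_Suc: "nscale (Suc k) x = nscale k x + x"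
  by (simp add: mhat_eq_iff vec_eq_iff algebra_simps)
lemma iota_add[simp]: "iota (u + v) = iota u + iota v"
  by (simp add: mhat_eq_iff)
lemma iota_minus[simp]: "iota (- u) = - iota u"
  by (simp add: mhat_eq_iff)
lemma iota_diff[simp]: "iota (u - v) = iota u - iota v"
  by (simp add: mhat_eq_iff)
lemma iota_matrix_vector_mult[simp]: "iota (g *v v) = gact g (iota v)"
  by (simp add: mhat_eq_iff)
lemma iota_smult[simp]: "iota (int k *s v) = nscale k (iota v)"
  by (simp add: mhat_eq_iff)

lemma nscale_inj: assumes k: "0<k" and e: "nscale k x = nscale k y" shows "x = y"
proof (unfold mhat_eq_iff, intro allI impI)
  fix n :: nat assume n: "0<n"
  have kn: "0 < k*n" using k n by simp
  have "level (k*n) (nscale k x) = level (k*n) (nscale k y)" using e by simp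
  then have "vmod (int k *s level (k*n) x) (int (k*n)) = vmod (int k *s level (k*n) y) (int (k*n))"
    using kn by simp
  then have "\<forall>i. (int k * level (k*n) x $ i) mod (int k * int n) = (int k * level (k*n) y $ i) mod (int k * int n)"
    by (simp add: vec_eq_iff)
  then have "\<forall>i. level (k*n) x $ i mod int n = level (k*n) y $ i mod int n"
    using k by (simp add: mod_mult_mult1)
  then have "vmod (level (k*n) x) (int n) = vmod (level (k*n) y) (int n)" by (simp add: vec_eq_iff)
  then show "level n x = level n y" using level_compat[of n "k*n" x] level_compat[of n "k*n" y] n kn by simp
qed

lemma div_mod_mult_eq: "(k::int) \<noteq> 0 \<Longrightarrow> k dvd a \<Longrightarrow> (a div k) mod m = (a mod (k * m)) div k"
  by (auto simp: mod_mult_mult1)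

text \<open>The quotient is built levelwise: level \<open>n\<close> of \<open>x / k\<close> is read off level \<open>k n\<close> of \<open>x\<close>.\<close>

lemma Mhat_car_divisible: assumes x: "x \<in> Mhat_car" and k: "0<k" and xk: "x k = 0"
  shows "\<exists>y\<in>Mhat_car. hscal k y = x"
proof -
  define F where "F n = (\<chi> i. x (k*n) $ i div int k)" for n
  have dvd: "int k dvd x (k*n) $ i" if n: "0<n" for n i
  proof -
    have "vmod (x (k*n)) (int k) = x k" using Mhat_car_compat[OF x k, of "k*n"] n k by simp
    then show ?thesis using xk by (simp add: vec_eq_iff dvd_eq_mod_eq_0)
  qed
  have Fmod: "vmod (F n) (int m) = F m" if h: "0<m" "0<n" "m dvd n" for m n
  proof -
    have "x (k*n) $ i mod (int k * int m) = x (k*m) $ i" for i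
      using Mhat_car_compat[OF x, of "k*m" "k*n"] h k by (simp add: vec_eq_iff)
    moreover have "x (k*m) $ i mod (int k * int m) = x (k*m) $ i" for i
      using Mhat_car_red[OF x, of "k*m"] h k by (simp add: vec_eq_iff)
    ultimately show ?thesis
      using dvd[OF h(1)] dvd[OF h(2)] k by (simp add: F_def vec_eq_iff div_mod_mult_eq)
  qed
  define y where "y = (\<lambda>n. if n = 0 then 0 else vmod (F n) (int n))"
  have yin: "y \<in> Mhat_car" unfolding y_def
    by (rule Mhat_car_reduceI) (simp add: Fmod vmod_dvd)
  have "hscal k y = x"
  proof (rule Mhat_car_eqI[OF hscal_in[OF yin] x])
    fix n :: nat assume n: "0<n"
    have "int k *s F n = x (k*n)" using dvd[OF n] k
      by (simp add: F_def vec_eq_iff)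
    then have "hscal k y n = vmod (x (k*n)) (int n)" using n by (simp add: y_def)
    also have "\<dots> = x n" using Mhat_car_compat[OF x n, of "k*n"] n k by simp
    finally show "hscal k y n = x n" .
  qed
  then show ?thesis using yin by blast
qed

definition divisible :: "nat \<Rightarrow> 'd::finite mhat \<Rightarrow> bool" where
  "divisible k x \<longleftrightarrow> (\<exists>w. x = nscale k w)"

lemma divisible_iff_level: assumes k: "0<k" shows "divisible k x \<longleftrightarrow> level k x = 0"
proof
  assume "divisible k x" then show "level k x = 0"
    using k by (auto simp: divisible_def vec_eq_iff)
next
  assume "level k x = 0"
  then have "Rep_mhat x \<in> Mhat_car" "Rep_mhat x k = 0" using Rep_mhat by (auto simp: level.rep_eq)
  then obtain y where y: "y \<in> Mhat_car" "hscal k y = Rep_mhat x" using Mhat_car_divisible k by blast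
  then have "nscale k (Abs_mhat y) = x"
    by (simp add: nscale.abs_eq eq_onp_same_args Rep_mhat_inverse)
  then show "divisible k x" unfolding divisible_def by metis
qed

lemma divisible_add: "divisible k x \<Longrightarrow> divisible k y \<Longrightarrow> divisible k (x + y)"
  unfolding divisible_def by (metis nscale_add)
lemma divisible_diff: "divisible k x \<Longrightarrow> divisible k y \<Longrightarrow> divisible k (x - y)"
  unfolding divisible_def by (metis nscale_diff)
lemma divisible_minus_iff: "divisible k (- x) \<longleftrightarrow> divisible k x"
  unfolding divisible_def by (metis nscale_minus minus_minus)
lemma divisible_gact: "divisible k x \<Longrightarrow> divisible k (gact g x)"
  unfolding divisible_def by (metis nscale_gact)
lemma divisible_zero: "divisible k 0"
  unfolding divisible_def by (metis nscale_zero)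
lemma divisible_nscale: "divisible k (nscale k w)"
  unfolding divisible_def by blast

lemma divisible_choice: "\<forall>g\<in>G. divisible q (X g) \<Longrightarrow> \<exists>w. \<forall>g\<in>G. X g = nscale q (w g)"
  unfolding divisible_def by (rule bchoice) auto

lemma level_eq_iff: "0<k \<Longrightarrow> level k x = level k y \<longleftrightarrow> divisible k (x - y)"
proof -
  assume k: "0<k"
  have "level k x = level k y \<longleftrightarrow> vmod (level k x) (int k) = vmod (level k y) (int k)" using k by simp
  also have "\<dots> \<longleftrightarrow> vmod (level k x - level k y) (int k) = 0" by (rule vmod_eq_iff)
  also have "\<dots> \<longleftrightarrow> level k (x - y) = 0" using k by simp
  finally show ?thesis using divisible_iff_level[OF k, of "x - y"] by simp
qed

lemma level_nscale_self[simp]: "0<k \<Longrightarrow> level k (nscale k x) = 0"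
  by (simp add: vec_eq_iff)

lemma divisible_iota_level: "0<k \<Longrightarrow> divisible k (iota (level k x) - x)"
  using level_eq_iff[of k "iota (level k x)" x] by simp

lemma vmod_eq_iff_divisible: "0<k \<Longrightarrow> vmod u (int k) = vmod v (int k) \<longleftrightarrow> divisible k (iota u - iota v)"
  using level_eq_iff[of k "iota u" "iota v"] by simp

lemma sum_const_nscale: "finite A \<Longrightarrow> (\<Sum>k\<in>A. x) = nscale (card A) x"
  by (induction A rule: finite_induct) (simp_all add: nscale_Suc add.commute)

lemma gact_sum: "gact g (sum f A) = (\<Sum>k\<in>A. gact g (f k))"
  by (induction A rule: infinite_finite_induct) simp_all

section \<open>Inhomogeneous coboundaries in \<open>Mhat\<close>\<close>

definition cobound :: "(int^'d^'d \<Rightarrow> 'd::finite mhat) \<Rightarrow> int^'d^'d \<Rightarrow> int^'d^'d \<Rightarrow> 'd mhat" where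
  "cobound c g h = gact g (c h) - c (g ** h) + c g"

lemma cobound_diff: "cobound c g h - cobound c' g h = cobound (\<lambda>k. c k - c' k) g h"
  by (simp add: cobound_def algebra_simps)
lemma cobound_add: "cobound c g h + cobound c' g h = cobound (\<lambda>k. c k + c' k) g h"
  by (simp add: cobound_def algebra_simps)
lemma nscale_cobound: "nscale k (cobound c g h) = cobound (\<lambda>x. nscale k (c x)) g h"
  by (simp add: cobound_def)

lemma divisible_cobound:
  "divisible k (c g) \<Longrightarrow> divisible k (c h) \<Longrightarrow> divisible k (c (g**h)) \<Longrightarrow> divisible k (cobound c g h)"
  unfolding cobound_def by (intro divisible_add divisible_diff divisible_gact)

lemma divisible_cobound_cong:
  assumes "\<And>k. k \<in> {g, h, g**h} \<Longrightarrow> divisible q (c k - c' k)" and "divisible q (cobound c' g h)"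
  shows "divisible q (cobound c g h)"
proof -
  have "cobound c g h = cobound c' g h + cobound (\<lambda>k. c k - c' k) g h"
    by (simp add: cobound_def algebra_simps)
  moreover have "divisible q (cobound (\<lambda>k. c k - c' k) g h)"
    using assms(1) by (intro divisible_cobound) auto
  ultimately show ?thesis using assms(2) by (simp add: divisible_add)
qed

lemma divided_cobound_diff:
  assumes mult: "\<forall>g\<in>G. \<forall>h\<in>G. g ** h \<in> G" and q: "0<q"
    and w: "\<forall>g\<in>G. c g - c' g - (gact g a - a) = nscale q (w g)"
    and B: "\<forall>g\<in>G. \<forall>h\<in>G. nscale q (B g h) = cobound c g h"
    and B': "\<forall>g\<in>G. \<forall>h\<in>G. nscale q (B' g h) = cobound c' g h"
  shows "\<forall>g\<in>G. \<forall>h\<in>G. B g h - B' g h = cobound w g h"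
proof (intro ballI)
  fix g h assume g: "g\<in>G" and h: "h\<in>G"
  have e: "c x = c' x + (gact x a - a) + nscale q (w x)" if "x \<in> {g, h, g**h}" for x
  proof -
    have "c x - c' x - (gact x a - a) = nscale q (w x)" using w that g h mult by auto
    then show ?thesis by (simp add: algebra_simps)
  qed
  show "B g h - B' g h = cobound w g h"
  proof (rule nscale_inj[OF q])
    have "nscale q (B g h - B' g h) = cobound c g h - cobound c' g h" using B B' g h by simp
    also have "\<dots> = nscale q (cobound w g h)"
      by (simp add: e cobound_def algebra_simps)
    finally show "nscale q (B g h - B' g h) = nscale q (cobound w g h)" .
  qed
qed

section \<open>Minkowski's lemma\<close>

definition mscale :: "int \<Rightarrow> int^'d^'d \<Rightarrow> int^'d^'d" where
  "mscale k M = (\<chi> i j. k * M$i$j)"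

lemma mscale_nth[simp]: "mscale k M $ i $ j = k * M$i$j" by (simp add: mscale_def)
lemma mscale_add_right: "mscale k (X + Y) = mscale k X + mscale k Y" by (simp add: vec_eq_iff algebra_simps)
lemma mscale_add_left: "mscale (a + b) X = mscale a X + mscale b X" by (simp add: vec_eq_iff algebra_simps)
lemma mscale_mscale: "mscale a (mscale b X) = mscale (a*b) X" by (simp add: vec_eq_iff algebra_simps)
lemma mscale_matrix_mul_left: "mscale k X ** Y = mscale k (X ** Y)"
  by (simp add: vec_eq_iff matrix_matrix_mult_def sum_distrib_left algebra_simps)
lemma mscale_matrix_mul_right: "X ** mscale k Y = mscale k (X ** Y)"
  by (simp add: vec_eq_iff matrix_matrix_mult_def sum_distrib_left algebra_simps)
lemma matrix_add_rdistrib: "((A::int^'n^'m) + B) ** C = A ** C + B ** C"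
  by (simp add: vec_eq_iff matrix_matrix_mult_def sum.distrib algebra_simps)

primrec mpow :: "int^'d^'d \<Rightarrow> nat \<Rightarrow> int^'d^'d" where
  "mpow A 0 = mat 1"
| "mpow A (Suc n) = mpow A n ** A"

lemma mpow_add: "mpow A (a + b) = mpow A a ** mpow A b"
  by (induction b) (simp_all add: matrix_mul_assoc)
lemma mpow_mult: "mpow A (a * b) = mpow (mpow A a) b"
proof (induction b)
  case (Suc b)
  have "mpow A (a * Suc b) = mpow A (a*b + a)" by (simp add: add.commute)
  also have "\<dots> = mpow A (a*b) ** mpow A a" by (rule mpow_add)
  finally show ?case using Suc by simp
qed simp

definition mcong :: "int \<Rightarrow> int^'d^'d \<Rightarrow> int^'d^'d \<Rightarrow> bool" where
  "mcong N A B \<longleftrightarrow> (\<exists>C. A = B + mscale N C)"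

lemma mcong_iff: "mcong N A B \<longleftrightarrow> (\<forall>i j. N dvd A$i$j - B$i$j)"
proof
  assume "mcong N A B" then show "\<forall>i j. N dvd A$i$j - B$i$j" by (auto simp: mcong_def)
next
  assume h: "\<forall>i j. N dvd A$i$j - B$i$j"
  define C where "C = (\<chi> i j. (A$i$j - B$i$j) div N)"
  have "A = B + mscale N C" using h by (simp add: vec_eq_iff C_def)
  then show "mcong N A B" by (auto simp: mcong_def)
qed

lemma mcong_mult: assumes "mcong N A (mat 1)" "mcong N B (mat 1)" shows "mcong N (A ** B) (mat 1)"
proof -
  obtain C D where "A = mat 1 + mscale N C" "B = mat 1 + mscale N D" using assms by (auto simp: mcong_def)
  then have "A ** B = mat 1 + mscale N (C + D + mscale N (C ** D))"
    by (simp add: matrix_add_ldistrib matrix_add_rdistrib mscale_matrix_mul_left mscale_matrix_mul_right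
        mscale_add_right mscale_mscale algebra_simps)
  then show ?thesis by (auto simp: mcong_def)
qed

lemma mcong_mpow: "mcong N A (mat 1) \<Longrightarrow> mcong N (mpow A n) (mat 1)"
proof (induction n)
  case 0 have "mat 1 = mat 1 + mscale N 0" by (simp add: vec_eq_iff)
  then show ?case unfolding mcong_def by auto
next
  case (Suc n) then show ?case by (simp add: mcong_mult)
qed

lemma Suc_choose_2: "Suc n choose 2 = (n choose 2) + n"
  by (simp add: numeral_2_eq_2)

lemma mpow_one_plus_mscale:
  "\<exists>Y. mpow (mat 1 + mscale P C) n = mat 1 + mscale (int n * P) C + mscale (int (n choose 2) * P^2) (C ** C) + mscale (P^3) Y"
proof (induction n)
  case 0 show ?case by (intro exI[of _ 0]) (simp add: vec_eq_iff)
next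
  case (Suc n)
  then obtain Y where Y: "mpow (mat 1 + mscale P C) n = mat 1 + mscale (int n * P) C + mscale (int (n choose 2) * P^2) (C ** C) + mscale (P^3) Y"
    by blast
  let ?Y = "mscale (int (n choose 2)) (C ** C ** C) + Y + mscale P (Y ** C)"
  have "mpow (mat 1 + mscale P C) (Suc n) = mat 1 + mscale (int (Suc n) * P) C + mscale (int (Suc n choose 2) * P^2) (C ** C) + mscale (P^3) ?Y"
    by (simp add: Y Suc_choose_2 matrix_add_ldistrib matrix_add_rdistrib mscale_matrix_mul_left
        mscale_matrix_mul_right mscale_add_right mscale_mscale mscale_add_left[symmetric] algebra_simps power2_eq_square power3_eq_cube matrix_mul_assoc)
  then show ?case by blast
qed

lemma prime_power_factor_ge3: assumes "(q::nat) \<ge> 3" shows "\<exists>p k. prime p \<and> p^k dvd q \<and> k \<ge> 1 \<and> (p = 2 \<longrightarrow> k \<ge> 2)"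
proof (cases "4 dvd q")
  case True
  then show ?thesis by (intro exI[of _ 2] exI[of _ 2]) simp
next
  case False
  obtain q' where q': "odd q'" "q' dvd q" "q' \<noteq> 1"
  proof (cases "even q")
    case True
    then obtain r where r: "q = 2 * r" by blast
    have "odd r"
    proof
      assume "even r"
      then obtain s where "r = 2 * s" by blast
      then have "q = 4 * s" using r by simp
      then show False using False by simp
    qed
    moreover have "r \<noteq> 1" using r assms by auto
    ultimately show ?thesis using r by (intro that[of r]) auto
  next
    case False
    moreover have "q \<noteq> 1" using assms by simp
    ultimately show ?thesis by (intro that[of q]) auto
  qed
  obtain p where p: "prime p" "p dvd q'" using prime_factor_nat[OF q'(3)] by blast
  have "p \<noteq> 2" using p q'(1) by auto
  moreover have "p^1 dvd q" using p q' dvd_trans by auto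
  ultimately show ?thesis using p by blast
qed

lemma mscale_extract_prime_power:
  fixes B :: "int^'d^'d"
  assumes B: "B \<noteq> 0" and p: "prime p" and k: "\<forall>i j. int p ^ k dvd B$i$j"
  shows "\<exists>t\<ge>k. \<exists>C i j. B = mscale (int p ^ t) C \<and> \<not> int p dvd C$i$j"
proof -
  obtain i0 j0 where b0: "B$i0$j0 \<noteq> 0" using B by (auto simp: vec_eq_iff)
  define S where "S = {t. \<forall>i j. int p^t dvd B$i$j}"
  have p2: "p \<ge> 2" using p prime_ge_2_nat by blast
  have "S \<subseteq> {..nat \<bar>B$i0$j0\<bar>}"
  proof
    fix t assume "t \<in> S"
    then have "\<bar>int p ^ t\<bar> \<le> \<bar>B$i0$j0\<bar>" using b0 by (intro dvd_imp_le_int) (simp_all add: S_def)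
    moreover have "int t < int p ^ t"
    proof -
      have "t < 2^t" by (rule less_exp)
      also have "(2::nat)^t \<le> p^t" using p2 by (rule power_mono) simp
      finally show ?thesis by (metis of_nat_less_iff of_nat_power)
    qed
    ultimately have "int t \<le> \<bar>B$i0$j0\<bar>" by linarith
    then show "t \<in> {..nat \<bar>B$i0$j0\<bar>}" by simp
  qed
  then have finS: "finite S" using finite_subset by blast
  have kS: "k \<in> S" using k by (simp add: S_def)
  define t where "t = Max S"
  have tS: "t \<in> S" using finS kS unfolding t_def by (intro Max_in) auto
  have kt: "k \<le> t" using finS kS unfolding t_def by simp
  have t1: "Suc t \<notin> S" using Max_ge[OF finS, of "Suc t"] unfolding t_def by auto
  define C where "C = (\<chi> i j. B$i$j div int p ^ t)"
  have BC: "B = mscale (int p ^ t) C" using tS by (simp add: S_def C_def vec_eq_iff)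
  from t1 obtain i j where "\<not> int p^Suc t dvd B$i$j" by (auto simp: S_def)
  then have "\<not> int p dvd C$i$j" using BC by (auto simp: vec_eq_iff mult.commute)
  then show ?thesis using BC kt by blast
qed

text \<open>The \<open>p\<close>-adic valuations of the three terms of \<open>(1 + P C)\<^sup>l - 1\<close>, divided by \<open>P\<close>, cannot
cancel; for \<open>p = 2\<close> this needs \<open>4 dvd P\<close>, which is where \<open>q \<ge> 3\<close> enters.\<close>

lemma binomial_expansion_not_zero:
  fixes c d y P :: int
  assumes l: "prime l" and p: "prime p" and pP: "int p dvd P" and pc: "\<not> int p dvd c"
    and two: "p = 2 \<Longrightarrow> 4 dvd P"
    and eq: "int l * c + int (l choose 2) * P * d + P^2 * y = 0"
  shows False
proof -
  obtain s where s: "P = int p * s" using pP by blast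
  have p2: "p \<ge> 2" using p prime_ge_2_nat by blast
  consider "l \<noteq> p" | "l = p" "p = 2" | "l = p" "p \<noteq> 2" by blast
  then show False
  proof cases
    case 1
    have "int l * c = - (P * (int (l choose 2) * d + P * y))" using eq by (simp add: algebra_simps power2_eq_square)
    then have "int p dvd int l * c" using pP by simp
    then have "int p dvd int l \<or> int p dvd c" using p prime_dvd_multD by (metis prime_nat_int_transfer)
    then have "p dvd l" using pc by simp
    then show False using 1 p l primes_dvd_imp_eq by blast
  next
    case 2
    obtain r where r: "P = 4 * r" using two[OF 2(2)] by blast
    have "2 * c = 2 * (- (2 * (r * d + 4 * r * r * y)))" using eq 2 r
      by (simp add: algebra_simps power2_eq_square)
    then have "c = - (2 * (r * d + 4 * r * r * y))" by simp
    then show False using pc 2 by simp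
  next
    case 3
    have "odd p" using p 3 p2 by (intro prime_odd_nat) auto
    then have "even (p - 1)" using p2 by simp
    then obtain e where e: "p - 1 = 2 * e" by blast
    have lc: "int (l choose 2) = int p * int e"
      using 3 e p2 by (simp add: choose_two algebra_simps)
    have "int p * c = int p * (- (int e * P * d + int p * s * s * y))"
      using eq 3 lc s by (simp add: algebra_simps power2_eq_square)
    then have "c = - (int e * P * d + int p * s * s * y)" using p2 by (subst (asm) mult_cancel_left) simp
    then show False using pc pP by simp
  qed
qed

lemma congruent_prime_order_eq_one:
  fixes A :: "int^'d^'d"
  assumes q3: "q \<ge> 3" and cong: "mcong (int q) A (mat 1)"
    and l: "prime (l::nat)" and pw: "mpow A l = mat 1"
  shows "A = mat 1"
proof (rule ccontr)
  assume ne: "A \<noteq> mat 1"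
  obtain p k where p: "prime p" "p^k dvd q" "k \<ge> 1" "p = 2 \<longrightarrow> k \<ge> 2"
    using prime_power_factor_ge3[OF q3] by blast
  have "int p ^ k dvd int q" using p(2) by (metis of_nat_dvd_iff of_nat_power)
  then have "int p ^ k dvd A$i$j - mat 1$i$j" for i j
    using cong unfolding mcong_iff by (blast intro: dvd_trans)
  then have "\<forall>i j. int p ^ k dvd (A - mat 1)$i$j" by simp
  moreover have "A - mat 1 \<noteq> 0" using ne by simp
  ultimately obtain t C i j where t: "k \<le> t" and AC: "A - mat 1 = mscale (int p ^ t) C"
      and pc: "\<not> int p dvd C$i$j"
    using mscale_extract_prime_power[OF _ p(1)] by blast
  define P where "P = int p ^ t"
  have P0: "P \<noteq> 0" using p(1) by (simp add: P_def prime_gt_0_nat)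
  have A: "A = mat 1 + mscale P C" using AC unfolding P_def by (metis add.commute diff_add_cancel)
  obtain Y where "mpow (mat 1 + mscale P C) l = mat 1 + mscale (int l * P) C + mscale (int (l choose 2) * P^2) (C ** C) + mscale (P^3) Y"
    using mpow_one_plus_mscale by blast
  then have "(mscale (int l * P) C + mscale (int (l choose 2) * P^2) (C ** C) + mscale (P^3) Y)$i$j = 0"
    using pw A by (simp add: add.assoc)
  then have "P * (int l * C$i$j + int (l choose 2) * P * (C**C)$i$j + P^2 * Y$i$j) = 0"
    by (simp add: algebra_simps power2_eq_square power3_eq_cube)
  then have eq: "int l * C$i$j + int (l choose 2) * P * (C**C)$i$j + P^2 * Y$i$j = 0" using P0 by simp
  have pP: "int p dvd P" using t p(3) by (simp add: P_def dvd_power)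
  have "4 dvd P" if "p = 2"
  proof -
    have "(2::int)^2 dvd 2^t" using p(4) t that by (intro le_imp_power_dvd) simp
    then show ?thesis using that by (simp add: P_def)
  qed
  then show False using binomial_expansion_not_zero[OF l p(1) pP pc _ eq] by blast
qed

lemma congruent_finite_order_eq_one:
  fixes A :: "int^'d^'d"
  assumes q3: "q \<ge> 3" and cong: "mcong (int q) A (mat 1)"
    and pw: "mpow A r = mat 1" and r: "0 < r"
  shows "A = mat 1"
  using pw r
proof (induction r rule: less_induct)
  case (less r)
  show ?case
  proof (cases "r = 1")
    case True then show ?thesis using less.prems by simp
  next
    case False
    obtain l where l: "prime l" "l dvd r" using prime_factor_nat[OF False] by blast
    then obtain r' where r': "r = l * r'" by blast
    have l2: "l \<ge> 2" using l(1) prime_ge_2_nat by blast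
    have r'0: "0 < r'" using r' less.prems(2) by (cases r') auto
    have r'r: "r' < r" using r' l2 r'0 by simp
    have "mpow (mpow A r') l = mat 1" using less.prems(1) r' by (simp add: mpow_mult[symmetric] mult.commute)
    then have "mpow A r' = mat 1"
      using congruent_prime_order_eq_one[OF q3 mcong_mpow[OF cong] l(1)] by blast
    then show ?thesis using less.IH[OF r'r _ r'0] by blast
  qed
qed

section \<open>Finite matrix groups\<close>

locale matrix_group =
  fixes G :: "(int^'d::finite^'d) set"
  assumes finG: "finite G"
    and oneG: "mat 1 \<in> G"
    and multG: "\<forall>g\<in>G. \<forall>h\<in>G. g ** h \<in> G"
    and invG: "\<forall>g\<in>G. \<exists>h\<in>G. g ** h = mat 1"
begin

lemma mult_closed: "g \<in> G \<Longrightarrow> h \<in> G \<Longrightarrow> g ** h \<in> G"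
  using multG by blast

lemma inverse_two_sided: assumes g: "g \<in> G" shows "\<exists>h\<in>G. h ** g = mat 1 \<and> g ** h = mat 1"
proof -
  obtain h where h: "h \<in> G" "g ** h = mat 1" using invG g by blast
  obtain k where k: "k \<in> G" "h ** k = mat 1" using invG h(1) by blast
  have "g = g ** (h ** k)" using k by simp
  also have "\<dots> = k" using h by (simp add: matrix_mul_assoc)
  finally have "h ** g = mat 1" using k by simp
  then show ?thesis using h by blast
qed

lemma left_cancel: assumes "h \<in> G" "h ** x = h ** y" shows "x = y"
proof -
  obtain h' where "h' ** h = mat 1" using inverse_two_sided assms(1) by blast
  then have "h' ** (h ** x) = h' ** (h ** y)" using assms by simp
  then show ?thesis using \<open>h' ** h = mat 1\<close> by (simp add: matrix_mul_assoc)
qed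

lemma left_translate_image: assumes h: "h \<in> G" shows "(**) h ` G = G"
proof
  show "(**) h ` G \<subseteq> G" using h mult_closed by auto
  show "G \<subseteq> (**) h ` G"
  proof
    fix k assume k: "k \<in> G"
    obtain h' where h': "h' \<in> G" "h ** h' = mat 1" using inverse_two_sided h by blast
    have "k = h ** (h' ** k)" using h' by (simp add: matrix_mul_assoc)
    then show "k \<in> (**) h ` G" using h' k mult_closed by blast
  qed
qed

lemma sum_left_translate: assumes h: "h \<in> G" shows "(\<Sum>k\<in>G. f (h ** k)) = (\<Sum>k\<in>G. (f k :: 'x::comm_monoid_add))"
proof -
  have "inj_on ((**) h) G" using left_cancel h by (auto simp: inj_on_def)
  then show ?thesis using sum.reindex[of "(**) h" G f] left_translate_image[OF h] by simp
qed

lemma mpow_in: "A \<in> G \<Longrightarrow> mpow A n \<in> G"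
  by (induction n) (simp_all add: oneG mult_closed)

lemma mpow_finite_order: assumes A: "A \<in> G" shows "\<exists>r>0. mpow A r = mat 1"
proof -
  have "range (mpow A) \<subseteq> G" using mpow_in A by auto
  then have "\<not> inj (mpow A)" using finG finite_subset finite_imageD infinite_UNIV_nat by blast
  then obtain a b where ab: "a < b" "mpow A a = mpow A b" by (metis linorder_neq_iff injI)
  have "mpow A a ** mat 1 = mpow A a ** mpow A (b - a)" using ab mpow_add[of A a "b-a"] by simp
  then have "mpow A (b - a) = mat 1" using left_cancel[OF mpow_in[OF A]] by metis
  then show ?thesis using ab(1) by (intro exI[of _ "b - a"]) simp
qed

lemma congruent_mod_eq:
  assumes q3: "q \<ge> 3" and g: "g \<in> G" and g': "g' \<in> G"
    and cong: "\<forall>v. vmod (g' *v v) (int q) = vmod (g *v v) (int q)"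
  shows "g' = g"
proof -
  have ent: "int q dvd g' $ k $ j - g $ k $ j" for k j
  proof -
    have "vmod (g' *v axis j 1) (int q) $ k = vmod (g *v axis j 1) (int q) $ k" using cong by simp
    then show ?thesis by (simp add: matrix_vector_mult_axis mod_eq_dvd_iff)
  qed
  obtain h where h: "h \<in> G" "h ** g = mat 1" "g ** h = mat 1" using inverse_two_sided[OF g] by blast
  define A where "A = h ** g'"
  have "A$i$j - mat 1$i$j = (\<Sum>k\<in>UNIV. h$i$k * (g'$k$j - g$k$j))" for i j
  proof -
    have "A$i$j - mat 1$i$j = (h ** g')$i$j - (h ** g)$i$j" using h by (simp add: A_def)
    then show ?thesis by (simp add: matrix_matrix_mult_def sum_subtractf algebra_simps)
  qed
  then have "mcong (int q) A (mat 1)" using ent by (simp add: mcong_iff dvd_sum)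
  moreover obtain r where "r > 0" "mpow A r = mat 1"
    using mpow_finite_order h(1) g' mult_closed unfolding A_def by blast
  ultimately have "A = mat 1" using congruent_finite_order_eq_one[OF q3] by blast
  then have "g ** (h ** g') = g" by (simp add: A_def)
  then show ?thesis using h(3) by (simp add: matrix_mul_assoc)
qed

lemma card_scaled_cocycle_is_cobound:
  assumes coc: "\<forall>g\<in>G. \<forall>h\<in>G. \<forall>k\<in>G. gact g (E h k) + E g (h**k) = E (g**h) k + E g h"
    and g: "g\<in>G" and h: "h\<in>G"
  shows "nscale (card G) (E g h) = cobound (\<lambda>g. \<Sum>k\<in>G. E g k) g h"
proof -
  have "(\<Sum>k\<in>G. gact g (E h k) + E g (h**k)) = (\<Sum>k\<in>G. E (g**h) k + E g h)"
    using coc g h by (intro sum.cong) auto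
  then have "gact g (\<Sum>k\<in>G. E h k) + (\<Sum>k\<in>G. E g k) = (\<Sum>k\<in>G. E (g**h) k) + nscale (card G) (E g h)"
    by (simp add: sum.distrib gact_sum sum_left_translate[OF h, of "E g"] sum_const_nscale[OF finG])
  then show ?thesis by (simp add: cobound_def algebra_simps)
qed

text \<open>Writing \<open>\<Sum>\<^sub>k E g k = iota c\<^sub>0 g + |G| b g\<close>, the integral coboundary of \<open>c\<^sub>0\<close> is divisible
by \<open>|G|\<close>, and its quotient is the integral cocycle.\<close>

lemma cocycle_cohomologous_integral:
  assumes coc: "\<forall>g\<in>G. \<forall>h\<in>G. \<forall>k\<in>G. gact g (E h k) + E g (h**k) = E (g**h) k + E g h"
  shows "\<exists>\<eta> b. cocycle2 G (Mint :: (int^'d, int^'d^'d) gmodule) \<eta>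
            \<and> (\<forall>g\<in>G. \<forall>h\<in>G. E g h = iota (\<eta> g h) + cobound b g h)"
proof -
  define m where "m = card G"
  have m: "0 < m" using oneG finG by (auto simp: m_def card_gt_0_iff)
  define C where "C g = (\<Sum>k\<in>G. E g k)" for g
  have avg: "nscale m (E g h) = cobound C g h" if "g\<in>G" "h\<in>G" for g h
    using card_scaled_cocycle_is_cobound[OF coc that] by (simp add: m_def C_def[abs_def])
  define c0 where "c0 g = level m (C g)" for g
  have "\<forall>g. \<exists>b. C g = iota (c0 g) + nscale m b"
  proof
    fix g
    obtain w where "iota (c0 g) - C g = nscale m w"
      using divisible_iota_level[OF m, of "C g"] unfolding divisible_def c0_def by blast
    then have "C g = iota (c0 g) + nscale m (- w)" by (simp add: algebra_simps)
    then show "\<exists>b. C g = iota (c0 g) + nscale m b" by blast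
  qed
  then obtain b where b: "\<And>g. C g = iota (c0 g) + nscale m (b g)" by metis
  define E0 where "E0 g h = g *v c0 h - c0 (g**h) + c0 g" for g h
  define \<eta> where "\<eta> g h = (\<chi> i. E0 g h $ i div int m)" for g h
  have iotaE0: "iota (E0 g h) = cobound (\<lambda>k. iota (c0 k)) g h" for g h
    by (simp add: E0_def cobound_def)
  have iotaE0': "iota (E0 g h) = nscale m (E g h - cobound b g h)" if "g\<in>G" "h\<in>G" for g h
    using avg[OF that] b by (simp add: iotaE0 cobound_def algebra_simps)
  have E0div: "int m *s \<eta> g h = E0 g h" if "g\<in>G" "h\<in>G" for g h
  proof -
    have "level m (iota (E0 g h)) = 0" by (simp only: iotaE0'[OF that] level_nscale_self[OF m])
    then have "\<forall>i. int m dvd E0 g h $ i" using m by (simp add: vec_eq_iff dvd_eq_mod_eq_0)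
    then show ?thesis by (simp add: \<eta>_def vec_eq_iff)
  qed
  have "g *v \<eta> h k + \<eta> g (h ** k) = \<eta> (g ** h) k + \<eta> g h"
    if g: "g\<in>G" and h: "h\<in>G" and k: "k\<in>G" for g h k
  proof (rule vector_smult_cancel)
    show "int m \<noteq> 0" using m by simp
    have "int m *s (g *v \<eta> h k + \<eta> g (h ** k)) = g *v (int m *s \<eta> h k) + int m *s \<eta> g (h ** k)"
      by (simp only: vector_add_ldistrib matrix_vector_mult_smult)
    also have "\<dots> = g *v E0 h k + E0 g (h ** k)" using g h k mult_closed by (simp add: E0div)
    also have "\<dots> = E0 (g ** h) k + E0 g h"
      by (simp add: E0_def algebra_simps matrix_vector_mul_assoc matrix_mul_assoc)
    also have "\<dots> = int m *s (\<eta> (g ** h) k + \<eta> g h)"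
      using g h k mult_closed by (simp add: E0div vector_add_ldistrib)
    finally show "int m *s (g *v \<eta> h k + \<eta> g (h ** k)) = int m *s (\<eta> (g ** h) k + \<eta> g h)" .
  qed
  then have "cocycle2 G (Mint :: (int^'d, int^'d^'d) gmodule) \<eta>"
    unfolding cocycle2_def by (simp add: Mint_def)
  moreover have "E g h = iota (\<eta> g h) + cobound b g h" if "g\<in>G" "h\<in>G" for g h
  proof (rule nscale_inj[OF m])
    have "nscale m (iota (\<eta> g h)) = iota (E0 g h)" using E0div[OF that] iota_smult by metis
    then show "nscale m (E g h) = nscale m (iota (\<eta> g h) + cobound b g h)"
      using iotaE0'[OF that] by (simp add: algebra_simps)
  qed
  ultimately show ?thesis by blast
qed

lemma scaled_cocycle_is_cobound:
  assumes expo: "\<forall>f. cocycle2 G (Mint :: (int^'d, int^'d^'d) gmodule) f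
                   \<longrightarrow> coboundary2 G (Mint :: (int^'d, int^'d^'d) gmodule) (\<lambda>g h. int q *s f g h)"
    and coc: "\<forall>g\<in>G. \<forall>h\<in>G. \<forall>k\<in>G. gact g (E h k) + E g (h**k) = E (g**h) k + E g h"
  shows "\<exists>c. \<forall>g\<in>G. \<forall>h\<in>G. nscale q (E g h) = cobound c g h"
proof -
  obtain \<eta> b where \<eta>: "cocycle2 G (Mint :: (int^'d, int^'d^'d) gmodule) \<eta>"
    and E: "\<forall>g\<in>G. \<forall>h\<in>G. E g h = iota (\<eta> g h) + cobound b g h"
    using cocycle_cohomologous_integral[OF coc] by blast
  obtain c where c: "\<forall>g\<in>G. \<forall>h\<in>G. int q *s \<eta> g h = d1 (Mint :: (int^'d, int^'d^'d) gmodule) c g h"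
    using expo \<eta> unfolding coboundary2_def by blast
  have "nscale q (E g h) = cobound (\<lambda>k. iota (c k) + nscale q (b k)) g h" if "g\<in>G" "h\<in>G" for g h
  proof -
    have "nscale q (iota (\<eta> g h)) = cobound (\<lambda>k. iota (c k)) g h"
      using c that by (simp add: d1_def msub_def Mint_def cobound_def flip: iota_smult)
    then show ?thesis using E that by (simp add: nscale_cobound cobound_add)
  qed
  then show ?thesis by blast
qed

end

section \<open>Cocycle conditions in \<open>Mhat\<close> and \<open>M/qM\<close>\<close>

lemma Mhat_simps[simp]: "mcar Mhat = Mhat_car" "madd Mhat = hadd" "mneg Mhat = hneg" "mact Mhat = hact"
  by (simp_all add: Mhat_def)
lemma Mq_simps[simp]: "mcar (Mq q) = {v. vmod v (int q) = v}" "madd (Mq q) = (\<lambda>v w. vmod (v + w) (int q))"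
  "mneg (Mq q) = (\<lambda>v. vmod (- v) (int q))" "mact (Mq q) = (\<lambda>g v. vmod (g *v v) (int q))"
  by (simp_all add: Mq_def)

lemma Rep_mhat_in[simp]: "Rep_mhat x \<in> Mhat_car" using Rep_mhat by blast
lemma Abs_mhat_inv[simp]: "x \<in> Mhat_car \<Longrightarrow> Rep_mhat (Abs_mhat x) = x" by (simp add: Abs_mhat_inverse)
lemma Abs_mhat_eq_iff: "x \<in> Mhat_car \<Longrightarrow> y \<in> Mhat_car \<Longrightarrow> Abs_mhat x = Abs_mhat y \<longleftrightarrow> x = y"
  by (simp add: Abs_mhat_inject)
lemma Abs_hadd: "x \<in> Mhat_car \<Longrightarrow> y \<in> Mhat_car \<Longrightarrow> Abs_mhat (hadd x y) = Abs_mhat x + Abs_mhat y"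
  by (simp add: plus_mhat.abs_eq eq_onp_same_args)
lemma Abs_hneg: "x \<in> Mhat_car \<Longrightarrow> Abs_mhat (hneg x) = - Abs_mhat x"
  by (simp add: uminus_mhat.abs_eq eq_onp_same_args)
lemma Abs_hact: "x \<in> Mhat_car \<Longrightarrow> Abs_mhat (hact g x) = gact g (Abs_mhat x)"
  by (simp add: gact.abs_eq eq_onp_same_args)
lemma Abs_hscal: "x \<in> Mhat_car \<Longrightarrow> Abs_mhat (hscal k x) = nscale k (Abs_mhat x)"
  by (simp add: nscale.abs_eq eq_onp_same_args)
lemma Abs_hiota: "Abs_mhat (hiota v) = iota v"
  by (simp add: iota.abs_eq eq_onp_same_args hiota_in)
lemma Rep_hiota: "hiota v = Rep_mhat (iota v)"
  by (simp add: iota.rep_eq)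
lemma Abs_msub: "x \<in> Mhat_car \<Longrightarrow> y \<in> Mhat_car \<Longrightarrow> Abs_mhat (msub Mhat x y) = Abs_mhat x - Abs_mhat y"
  by (simp add: msub_def Abs_hadd Abs_hneg hneg_in)
lemma msub_in: "x \<in> Mhat_car \<Longrightarrow> y \<in> Mhat_car \<Longrightarrow> msub Mhat x y \<in> Mhat_car"
  by (simp add: msub_def hadd_in hneg_in)
lemma Abs_Rep_level: "x \<in> Mhat_car \<Longrightarrow> x n = level n (Abs_mhat x)"
  by (simp add: level.rep_eq)
lemma Rep_level: "Rep_mhat x n = level n x"
  by (simp add: level.rep_eq)

lemma d1_in: "c h \<in> Mhat_car \<Longrightarrow> c (g**h) \<in> Mhat_car \<Longrightarrow> c g \<in> Mhat_car
   \<Longrightarrow> d1 Mhat c g h \<in> Mhat_car"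
  by (simp add: d1_def msub_in hadd_in hact_in)
lemma Abs_d1: "c h \<in> Mhat_car \<Longrightarrow> c (g**h) \<in> Mhat_car \<Longrightarrow> c g \<in> Mhat_car
   \<Longrightarrow> Abs_mhat (d1 Mhat c g h) = cobound (\<lambda>k. Abs_mhat (c k)) g h"
  by (simp add: d1_def cobound_def Abs_hadd Abs_msub msub_in hact_in Abs_hact)

lemma hdiv_eq: "0<q \<Longrightarrow> hdiv q (Rep_mhat (nscale q b)) = Rep_mhat b"
  unfolding hdiv_def
proof (rule the_equality)
  assume q: "0<q"
  show "Rep_mhat b \<in> Mhat_car \<and> hscal q (Rep_mhat b) = Rep_mhat (nscale q b)" by (simp add: nscale.rep_eq)
  fix x assume x: "x \<in> Mhat_car \<and> hscal q x = Rep_mhat (nscale q b)"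
  then have "nscale q (Abs_mhat x) = nscale q b"
    by (metis Abs_hscal Rep_mhat_inverse)
  then have "Abs_mhat x = b" by (rule nscale_inj[OF q])
  then show "x = Rep_mhat b" using x by auto
qed

context matrix_group
begin

lemma cocycle1_Mhat_iff: "cocycle1 G Mhat f \<longleftrightarrow> (\<forall>g\<in>G. f g \<in> Mhat_car) \<and>
   (\<forall>g\<in>G. \<forall>h\<in>G. Abs_mhat (f (g**h)) = Abs_mhat (f g) + gact g (Abs_mhat (f h)))"
proof -
  have "f (g**h) = hadd (f g) (hact g (f h)) \<longleftrightarrow> Abs_mhat (f (g**h)) = Abs_mhat (f g) + gact g (Abs_mhat (f h))"
    if "\<forall>g\<in>G. f g \<in> Mhat_car" "g\<in>G" "h\<in>G" for g h
    using that mult_closed by (simp add: Abs_hadd[symmetric] Abs_hact[symmetric] hact_in hadd_in Abs_mhat_eq_iff)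
  then show ?thesis unfolding cocycle1_def by auto
qed

lemma cohomologous1_Mhat_iff: assumes "\<forall>g\<in>G. f g \<in> Mhat_car" "\<forall>g\<in>G. f' g \<in> Mhat_car"
  shows "cohomologous1 G Mhat f f' \<longleftrightarrow> (\<exists>a. \<forall>g\<in>G. Abs_mhat (f g) - Abs_mhat (f' g) = gact g a - a)"
proof
  assume "cohomologous1 G Mhat f f'"
  then obtain a where a: "a \<in> Mhat_car" "\<forall>g\<in>G. msub Mhat (f g) (f' g) = msub Mhat (hact g a) a"
    unfolding cohomologous1_def coboundary1_def by auto
  have "Abs_mhat (f g) - Abs_mhat (f' g) = gact g (Abs_mhat a) - Abs_mhat a" if g: "g\<in>G" for g
  proof -
    have "Abs_mhat (msub Mhat (f g) (f' g)) = Abs_mhat (msub Mhat (hact g a) a)" using a g by simp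
    then show ?thesis using a(1) g assms by (simp add: Abs_msub hact_in Abs_hact)
  qed
  then show "\<exists>a. \<forall>g\<in>G. Abs_mhat (f g) - Abs_mhat (f' g) = gact g a - a" by blast
next
  assume "\<exists>a. \<forall>g\<in>G. Abs_mhat (f g) - Abs_mhat (f' g) = gact g a - a"
  then obtain a where a: "\<forall>g\<in>G. Abs_mhat (f g) - Abs_mhat (f' g) = gact g a - a" by blast
  have "msub Mhat (f g) (f' g) = msub Mhat (hact g (Rep_mhat a)) (Rep_mhat a)" if g: "g\<in>G" for g
  proof -
    have "Abs_mhat (msub Mhat (f g) (f' g)) = Abs_mhat (msub Mhat (hact g (Rep_mhat a)) (Rep_mhat a))"
      using a g assms by (simp add: Abs_msub hact_in Abs_hact Rep_mhat_inverse)
    then show ?thesis using g assms by (simp add: Abs_mhat_eq_iff msub_in hact_in)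
  qed
  then show "cohomologous1 G Mhat f f'"
    unfolding cohomologous1_def coboundary1_def by (intro bexI[of _ "Rep_mhat a"]) auto
qed

lemma cocycle2_Mhat_iff: "cocycle2 G Mhat \<eta> \<longleftrightarrow> (\<forall>g\<in>G. \<forall>h\<in>G. \<eta> g h \<in> Mhat_car) \<and>
   (\<forall>g\<in>G. \<forall>h\<in>G. \<forall>k\<in>G. gact g (Abs_mhat (\<eta> h k)) + Abs_mhat (\<eta> g (h**k)) = Abs_mhat (\<eta> (g**h) k) + Abs_mhat (\<eta> g h))"
proof -
  have "hadd (hact g (\<eta> h k)) (\<eta> g (h ** k)) = hadd (\<eta> (g ** h) k) (\<eta> g h) \<longleftrightarrow>
     gact g (Abs_mhat (\<eta> h k)) + Abs_mhat (\<eta> g (h**k)) = Abs_mhat (\<eta> (g**h) k) + Abs_mhat (\<eta> g h)"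
    if "\<forall>g\<in>G. \<forall>h\<in>G. \<eta> g h \<in> Mhat_car" "g\<in>G" "h\<in>G" "k\<in>G" for g h k
    using that mult_closed by (simp add: Abs_hadd[symmetric] Abs_hact[symmetric] hact_in hadd_in Abs_mhat_eq_iff)
  then show ?thesis unfolding cocycle2_def by auto
qed

lemma coboundary2_Mhat_iff: assumes "\<forall>g\<in>G. \<forall>h\<in>G. \<eta> g h \<in> Mhat_car"
  shows "coboundary2 G Mhat \<eta> \<longleftrightarrow> (\<exists>c. \<forall>g\<in>G. \<forall>h\<in>G. Abs_mhat (\<eta> g h) = cobound c g h)"
proof
  assume "coboundary2 G Mhat \<eta>"
  then obtain c where c: "\<forall>g\<in>G. c g \<in> Mhat_car" "\<forall>g\<in>G. \<forall>h\<in>G. \<eta> g h = d1 Mhat c g h"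
    unfolding coboundary2_def by auto
  have "Abs_mhat (\<eta> g h) = cobound (\<lambda>k. Abs_mhat (c k)) g h" if "g\<in>G" "h\<in>G" for g h
    using c that mult_closed by (simp add: Abs_d1)
  then show "\<exists>c. \<forall>g\<in>G. \<forall>h\<in>G. Abs_mhat (\<eta> g h) = cobound c g h" by blast
next
  assume "\<exists>c. \<forall>g\<in>G. \<forall>h\<in>G. Abs_mhat (\<eta> g h) = cobound c g h"
  then obtain c where c: "\<forall>g\<in>G. \<forall>h\<in>G. Abs_mhat (\<eta> g h) = cobound c g h" by blast
  have "\<eta> g h = d1 Mhat (\<lambda>k. Rep_mhat (c k)) g h" if "g\<in>G" "h\<in>G" for g h
  proof -
    have "Abs_mhat (\<eta> g h) = Abs_mhat (d1 Mhat (\<lambda>k. Rep_mhat (c k)) g h)"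
      using c that by (simp add: Abs_d1 Rep_mhat_inverse)
    then show ?thesis using assms that by (simp add: Abs_mhat_eq_iff d1_in)
  qed
  then show "coboundary2 G Mhat \<eta>" unfolding coboundary2_def
    by (intro exI[of _ "\<lambda>k. Rep_mhat (c k)"]) auto
qed

lemma cohomologous2_Mhat_iff: assumes "\<forall>g\<in>G. \<forall>h\<in>G. \<eta> g h \<in> Mhat_car" "\<forall>g\<in>G. \<forall>h\<in>G. \<eta>' g h \<in> Mhat_car"
  shows "cohomologous2 G Mhat \<eta> \<eta>' \<longleftrightarrow> (\<exists>c. \<forall>g\<in>G. \<forall>h\<in>G. Abs_mhat (\<eta> g h) - Abs_mhat (\<eta>' g h) = cobound c g h)"
proof -
  have "\<forall>g\<in>G. \<forall>h\<in>G. msub Mhat (\<eta> g h) (\<eta>' g h) \<in> Mhat_car" using assms by (simp add: msub_in)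
  from coboundary2_Mhat_iff[OF this] show ?thesis unfolding cohomologous2_def using assms by (simp add: Abs_msub)
qed

end

locale cohom_setting = matrix_group G for G :: "(int^'d::finite^'d) set" +
  fixes q :: nat
  assumes q3: "q \<ge> 3"
    and expo: "\<forall>f. cocycle2 G (Mint :: (int^'d, int^'d^'d) gmodule) f
                   \<longrightarrow> coboundary2 G (Mint :: (int^'d, int^'d^'d) gmodule) (\<lambda>g h. int q *s f g h)"
begin

lemma q_pos: "0 < q" using q3 by simp

lemma msub_Mq: "msub (Mq q) u v = vmod (u - v) (int q)"
  by (simp add: msub_def)

lemma cocycle1_Mq_iff: "cocycle1 G (Mq q) z \<longleftrightarrow> (\<forall>g\<in>G. vmod (z g) (int q) = z g) \<and>
   (\<forall>g\<in>G. \<forall>h\<in>G. divisible q (cobound (\<lambda>k. iota (z k)) g h))"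
proof -
  have "z (g**h) = vmod (z g + vmod (g *v z h) (int q)) (int q) \<longleftrightarrow> divisible q (cobound (\<lambda>k. iota (z k)) g h)"
    if r: "\<forall>g\<in>G. vmod (z g) (int q) = z g" and g: "g\<in>G" and h: "h\<in>G" for g h
  proof -
    have "z (g**h) = vmod (z g + vmod (g *v z h) (int q)) (int q) \<longleftrightarrow>
       vmod (z (g**h)) (int q) = vmod (z g + g *v z h) (int q)" using r g h mult_closed by auto
    also have "\<dots> \<longleftrightarrow> divisible q (iota (z (g**h)) - iota (z g + g *v z h))" by (rule vmod_eq_iff_divisible[OF q_pos])
    also have "iota (z (g**h)) - iota (z g + g *v z h) = - cobound (\<lambda>k. iota (z k)) g h"
      by (simp add: cobound_def algebra_simps)
    finally show ?thesis by (simp add: divisible_minus_iff)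
  qed
  then show ?thesis unfolding cocycle1_def by auto
qed

lemma cohomologous1_Mq_iff: assumes "\<forall>g\<in>G. vmod (z g) (int q) = z g" "\<forall>g\<in>G. vmod (z' g) (int q) = z' g"
  shows "cohomologous1 G (Mq q) z z' \<longleftrightarrow> (\<exists>a. \<forall>g\<in>G. divisible q (iota (z g) - iota (z' g) - (gact g a - a)))"
proof
  assume "cohomologous1 G (Mq q) z z'"
  then obtain a where a: "\<forall>g\<in>G. msub (Mq q) (z g) (z' g) = msub (Mq q) (vmod (g *v a) (int q)) a"
    unfolding cohomologous1_def coboundary1_def by auto
  have "divisible q (iota (z g) - iota (z' g) - (gact g (iota a) - iota a))" if g: "g\<in>G" for g
  proof -
    have "vmod (z g - z' g) (int q) = vmod (g *v a - a) (int q)" using a g by (simp add: msub_Mq)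
    then have "divisible q (iota (z g - z' g) - iota (g *v a - a))" by (simp only: vmod_eq_iff_divisible[OF q_pos])
    then show ?thesis by (simp add: algebra_simps)
  qed
  then show "\<exists>a. \<forall>g\<in>G. divisible q (iota (z g) - iota (z' g) - (gact g a - a))" by blast
next
  assume "\<exists>a. \<forall>g\<in>G. divisible q (iota (z g) - iota (z' g) - (gact g a - a))"
  then obtain a where a: "\<forall>g\<in>G. divisible q (iota (z g) - iota (z' g) - (gact g a - a))" by blast
  define a0 where "a0 = level q a"
  have a0: "vmod a0 (int q) = a0" using q_pos by (simp add: a0_def)
  have d: "divisible q (iota a0 - a)" unfolding a0_def by (rule divisible_iota_level[OF q_pos])
  have "msub (Mq q) (z g) (z' g) = msub (Mq q) (vmod (g *v a0) (int q)) a0" if g: "g\<in>G" for g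
  proof -
    have "iota (z g - z' g) - iota (g *v a0 - a0) =
      (iota (z g) - iota (z' g) - (gact g a - a)) - (gact g (iota a0 - a) - (iota a0 - a))"
      by (simp add: algebra_simps)
    moreover have "divisible q \<dots>" using a g by (intro divisible_diff[OF _ divisible_diff[OF divisible_gact[OF d] d]]) auto
    ultimately have "divisible q (iota (z g - z' g) - iota (g *v a0 - a0))" by simp
    then have "vmod (z g - z' g) (int q) = vmod (g *v a0 - a0) (int q)" by (simp only: vmod_eq_iff_divisible[OF q_pos])
    then show ?thesis by (simp add: msub_Mq)
  qed
  then show "cohomologous1 G (Mq q) z z'"
    unfolding cohomologous1_def coboundary1_def using a0 by (intro bexI[of _ a0]) auto
qed

lemma cohomologous1_Mq_eqI: assumes "\<forall>g\<in>G. vmod (z g) (int q) = z g" "\<forall>g\<in>G. z' g = z g"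
  shows "cohomologous1 G (Mq q) z z'"
  using assms by (subst cohomologous1_Mq_iff) (auto intro!: exI[of _ 0] divisible_zero)

section \<open>The exact sequence\<close>

definition Beta :: "(int^'d^'d \<Rightarrow> int^'d) \<Rightarrow> int^'d^'d \<Rightarrow> int^'d^'d \<Rightarrow> 'd mhat" where
  "Beta z g h = (SOME b. nscale q b = cobound (\<lambda>k. iota (z k)) g h)"

lemma Beta_spec: assumes "divisible q (cobound (\<lambda>k. iota (z k)) g h)"
  shows "nscale q (Beta z g h) = cobound (\<lambda>k. iota (z k)) g h" "beta q z g h = Rep_mhat (Beta z g h)"
proof -
  show b: "nscale q (Beta z g h) = cobound (\<lambda>k. iota (z k)) g h"
    unfolding Beta_def by (rule someI_ex) (use assms in \<open>auto simp: divisible_def\<close>)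
  have e: "Abs_mhat (d1 Mhat (\<lambda>k. hiota (z k)) g h) = cobound (\<lambda>k. iota (z k)) g h"
    by (simp add: Abs_d1 hiota_in Abs_hiota)
  have "d1 Mhat (\<lambda>k. hiota (z k)) g h \<in> Mhat_car" by (simp add: d1_in hiota_in)
  then have "d1 Mhat (\<lambda>k. hiota (z k)) g h = Rep_mhat (cobound (\<lambda>k. iota (z k)) g h)"
    using e by (metis Abs_mhat_inv)
  then show "beta q z g h = Rep_mhat (Beta z g h)"
    unfolding beta_def by (simp add: b[symmetric] hdiv_eq q_pos)
qed

lemma redq_cocycle: "cocycle1 G Mhat f \<Longrightarrow> cocycle1 G (Mq q) (redq q f)"
proof -
  assume f: "cocycle1 G Mhat f"
  then have fc: "\<forall>g\<in>G. f g \<in> Mhat_car" and fe: "\<forall>g\<in>G. \<forall>h\<in>G. Abs_mhat (f (g**h)) = Abs_mhat (f g) + gact g (Abs_mhat (f h))"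
    by (auto simp: cocycle1_Mhat_iff)
  have r: "redq q f g = level q (Abs_mhat (f g))" if "g\<in>G" for g
    using fc that by (simp add: redq_def Abs_Rep_level)
  show ?thesis unfolding cocycle1_Mq_iff
  proof (intro conjI ballI)
    fix g assume g: "g\<in>G" show "vmod (redq q f g) (int q) = redq q f g" using r[OF g] q_pos by simp
  next
    fix g h assume g: "g\<in>G" and h: "h\<in>G"
    show "divisible q (cobound (\<lambda>k. iota (redq q f k)) g h)"
    proof (rule divisible_cobound_cong[of g h q _ "\<lambda>k. Abs_mhat (f k)"])
      fix k assume "k \<in> {g, h, g**h}"
      then have "k\<in>G" using g h mult_closed by auto
      then show "divisible q (iota (redq q f k) - Abs_mhat (f k))" using r divisible_iota_level[OF q_pos] by simp
    next
      have "cobound (\<lambda>k. Abs_mhat (f k)) g h = 0" using fe g h by (simp add: cobound_def)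
      then show "divisible q (cobound (\<lambda>k. Abs_mhat (f k)) g h)" by (simp add: divisible_zero)
    qed
  qed
qed

lemma redq_cohomologous: assumes f: "cocycle1 G Mhat f" and f': "cocycle1 G Mhat f'" and c: "cohomologous1 G Mhat f f'"
  shows "cohomologous1 G (Mq q) (redq q f) (redq q f')"
proof -
  have fc: "\<forall>g\<in>G. f g \<in> Mhat_car" "\<forall>g\<in>G. f' g \<in> Mhat_car" using f f' by (auto simp: cocycle1_Mhat_iff)
  obtain a where a: "\<forall>g\<in>G. Abs_mhat (f g) - Abs_mhat (f' g) = gact g a - a" using c cohomologous1_Mhat_iff[OF fc] by blast
  have r: "redq q f g = level q (Abs_mhat (f g))" "redq q f' g = level q (Abs_mhat (f' g))" if "g\<in>G" for g
    using fc that by (simp_all add: redq_def Abs_Rep_level)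
  have red: "\<forall>g\<in>G. vmod (redq q f g) (int q) = redq q f g" "\<forall>g\<in>G. vmod (redq q f' g) (int q) = redq q f' g"
    using r q_pos by simp_all
  show ?thesis unfolding cohomologous1_Mq_iff[OF red]
  proof (intro exI[of _ a] ballI)
    fix g assume g: "g\<in>G"
    have "iota (redq q f g) - iota (redq q f' g) - (gact g a - a) =
      (iota (level q (Abs_mhat (f g))) - Abs_mhat (f g)) - (iota (level q (Abs_mhat (f' g))) - Abs_mhat (f' g))
      + (Abs_mhat (f g) - Abs_mhat (f' g) - (gact g a - a))" using r g by (simp add: algebra_simps)
    also have "\<dots> = (iota (level q (Abs_mhat (f g))) - Abs_mhat (f g)) - (iota (level q (Abs_mhat (f' g))) - Abs_mhat (f' g))"
      using a g by simp
    finally show "divisible q (iota (redq q f g) - iota (redq q f' g) - (gact g a - a))"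
      by (simp add: divisible_diff divisible_iota_level[OF q_pos])
  qed
qed

lemma redq_additive: assumes f: "cocycle1 G Mhat f" and f': "cocycle1 G Mhat f'"
  shows "cohomologous1 G (Mq q) (redq q (\<lambda>g. hadd (f g) (f' g))) (\<lambda>g. madd (Mq q) (redq q f g) (redq q f' g))"
  by (rule cohomologous1_Mq_eqI) (use q_pos in \<open>auto simp: redq_def\<close>)

lemma cocycle1_MqD: assumes "cocycle1 G (Mq q) z"
  shows "\<forall>g\<in>G. vmod (z g) (int q) = z g" "\<forall>g\<in>G. \<forall>h\<in>G. divisible q (cobound (\<lambda>k. iota (z k)) g h)"
  using assms by (auto simp: cocycle1_Mq_iff)

lemma beta_in_Mhat: "cocycle1 G (Mq q) z \<Longrightarrow> \<forall>g\<in>G. \<forall>h\<in>G. beta q z g h \<in> Mhat_car"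
  using Beta_spec(2) cocycle1_MqD by simp

lemma Abs_beta: "cocycle1 G (Mq q) z \<Longrightarrow> g\<in>G \<Longrightarrow> h\<in>G \<Longrightarrow> Abs_mhat (beta q z g h) = Beta z g h"
  using Beta_spec(2) cocycle1_MqD by (simp add: Rep_mhat_inverse)

lemma nscale_Beta: "cocycle1 G (Mq q) z \<Longrightarrow> \<forall>g\<in>G. \<forall>h\<in>G. nscale q (Beta z g h) = cobound (\<lambda>k. iota (z k)) g h"
  using Beta_spec(1) cocycle1_MqD by simp

lemma beta_cocycle: assumes z: "cocycle1 G (Mq q) z" shows "cocycle2 G Mhat (beta q z)"
  unfolding cocycle2_Mhat_iff
proof (intro conjI ballI)
  fix g h assume "g\<in>G" "h\<in>G" then show "beta q z g h \<in> Mhat_car" using beta_in_Mhat[OF z] by blast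
next
  fix g h k assume g: "g\<in>G" and h: "h\<in>G" and k: "k\<in>G"
  show "gact g (Abs_mhat (beta q z h k)) + Abs_mhat (beta q z g (h ** k)) =
        Abs_mhat (beta q z (g ** h) k) + Abs_mhat (beta q z g h)"
  proof (rule nscale_inj[OF q_pos])
    let ?Z = "\<lambda>k. iota (z k)"
    have e: "nscale q (Beta z h k) = cobound ?Z h k" "nscale q (Beta z g (h**k)) = cobound ?Z g (h**k)"
      "nscale q (Beta z (g**h) k) = cobound ?Z (g**h) k" "nscale q (Beta z g h) = cobound ?Z g h"
      using nscale_Beta[OF z] g h k mult_closed by auto
    have "nscale q (gact g (Beta z h k) + Beta z g (h ** k)) = gact g (cobound ?Z h k) + cobound ?Z g (h**k)"
      by (simp only: nscale_add nscale_gact e)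
    also have "\<dots> = cobound ?Z (g**h) k + cobound ?Z g h"
      by (simp add: cobound_def algebra_simps matrix_mul_assoc)
    also have "\<dots> = nscale q (Beta z (g ** h) k + Beta z g h)" by (simp only: nscale_add e)
    finally have "nscale q (gact g (Beta z h k) + Beta z g (h ** k)) = nscale q (Beta z (g ** h) k + Beta z g h)" .
    then show "nscale q (gact g (Abs_mhat (beta q z h k)) + Abs_mhat (beta q z g (h ** k))) =
        nscale q (Abs_mhat (beta q z (g ** h) k) + Abs_mhat (beta q z g h))"
      using g h k mult_closed by (simp add: Abs_beta[OF z])
  qed
qed

lemma beta_cohomologous: assumes z: "cocycle1 G (Mq q) z" and z': "cocycle1 G (Mq q) z'" and c: "cohomologous1 G (Mq q) z z'"
  shows "cohomologous2 G Mhat (beta q z) (beta q z')"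
proof -
  obtain a where a: "\<forall>g\<in>G. divisible q (iota (z g) - iota (z' g) - (gact g a - a))"
    using c cohomologous1_Mq_iff[OF cocycle1_MqD(1)[OF z] cocycle1_MqD(1)[OF z']] by blast
  obtain w where w: "\<forall>g\<in>G. iota (z g) - iota (z' g) - (gact g a - a) = nscale q (w g)" using divisible_choice[OF a] by blast
  have "\<forall>g\<in>G. \<forall>h\<in>G. Beta z g h - Beta z' g h = cobound w g h"
    by (rule divided_cobound_diff[OF multG q_pos w nscale_Beta[OF z] nscale_Beta[OF z']])
  then show ?thesis
    by (subst cohomologous2_Mhat_iff[OF beta_in_Mhat[OF z] beta_in_Mhat[OF z']]) (auto simp: Abs_beta z z' intro!: exI[of _ w])
qed

lemma beta_additive: assumes z: "cocycle1 G (Mq q) z" and z': "cocycle1 G (Mq q) z'"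
  shows "cohomologous2 G Mhat (beta q (\<lambda>g. madd (Mq q) (z g) (z' g)))
                                  (\<lambda>g h. hadd (beta q z g h) (beta q z' g h))"
proof -
  define z2 where "z2 g = vmod (z g + z' g) (int q)" for g
  have z2e: "(\<lambda>g. madd (Mq q) (z g) (z' g)) = z2" by (simp add: z2_def[abs_def])
  have dd: "divisible q (iota (z2 k) - (iota (z k) + iota (z' k)))" for k
  proof -
    have "level q (iota (z2 k)) = level q (iota (z k) + iota (z' k))" using q_pos by (simp add: z2_def)
    then show ?thesis using level_eq_iff[OF q_pos] by blast
  qed
  have z2: "cocycle1 G (Mq q) z2" unfolding cocycle1_Mq_iff
  proof (intro conjI ballI)
    fix g show "vmod (z2 g) (int q) = z2 g" by (simp add: z2_def)
  next
    fix g h assume g: "g\<in>G" and h: "h\<in>G"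
    show "divisible q (cobound (\<lambda>k. iota (z2 k)) g h)"
    proof (rule divisible_cobound_cong[of g h q _ "\<lambda>k. iota (z k) + iota (z' k)"])
      show "divisible q (iota (z2 k) - (iota (z k) + iota (z' k)))" for k by (rule dd)
      have "cobound (\<lambda>k. iota (z k) + iota (z' k)) g h = cobound (\<lambda>k. iota (z k)) g h + cobound (\<lambda>k. iota (z' k)) g h"
        by (simp add: cobound_add)
      then show "divisible q (cobound (\<lambda>k. iota (z k) + iota (z' k)) g h)"
        using cocycle1_MqD(2)[OF z] cocycle1_MqD(2)[OF z'] g h by (simp add: divisible_add)
    qed
  qed
  obtain w where w: "\<forall>g\<in>G. iota (z2 g) - (iota (z g) + iota (z' g)) - (gact g 0 - 0) = nscale q (w g)"
    using divisible_choice[of G q "\<lambda>g. iota (z2 g) - (iota (z g) + iota (z' g)) - (gact g 0 - 0)"] dd by auto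
  have B': "\<forall>g\<in>G. \<forall>h\<in>G. nscale q (Beta z g h + Beta z' g h) = cobound (\<lambda>k. iota (z k) + iota (z' k)) g h"
    using nscale_Beta[OF z] nscale_Beta[OF z'] by (simp add: cobound_add)
  have L: "\<forall>g\<in>G. \<forall>h\<in>G. Beta z2 g h - (Beta z g h + Beta z' g h) = cobound w g h"
    by (rule divided_cobound_diff[OF multG q_pos w nscale_Beta[OF z2] B'])
  have inn: "\<forall>g\<in>G. \<forall>h\<in>G. hadd (beta q z g h) (beta q z' g h) \<in> Mhat_car"
    using beta_in_Mhat[OF z] beta_in_Mhat[OF z'] by (simp add: hadd_in)
  show ?thesis unfolding z2e
    by (subst cohomologous2_Mhat_iff[OF beta_in_Mhat[OF z2] inn])
       (use L in \<open>auto simp: Abs_beta z z' z2 Abs_hadd beta_in_Mhat intro!: exI[of _ w]\<close>)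
qed

lemma beta_coboundary_imp_lift:
  assumes z: "cocycle1 G (Mq q) z" and "coboundary2 G Mhat (beta q z)"
  shows "\<exists>f. cocycle1 G Mhat f \<and> cohomologous1 G (Mq q) z (redq q f)"
proof -
  obtain c where c: "\<forall>g\<in>G. \<forall>h\<in>G. Beta z g h = cobound c g h"
    using assms(2) coboundary2_Mhat_iff[OF beta_in_Mhat[OF z]] Abs_beta[OF z] by auto
  define F where "F g = iota (z g) - nscale q (c g)" for g
  have Fe: "F (g**h) = F g + gact g (F h)" if g: "g\<in>G" and h: "h\<in>G" for g h
  proof -
    have "cobound (\<lambda>k. iota (z k)) g h = cobound (\<lambda>k. nscale q (c k)) g h"
      using nscale_Beta[OF z] c g h by (simp add: nscale_cobound)
    then have "F (g**h) - (F g + gact g (F h)) = 0"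
      by (simp add: F_def cobound_def algebra_simps)
    then show ?thesis by simp
  qed
  have fcoc: "cocycle1 G Mhat (\<lambda>g. Rep_mhat (F g))"
    unfolding cocycle1_Mhat_iff by (simp add: Rep_mhat_inverse Fe)
  have "redq q (\<lambda>g. Rep_mhat (F g)) g = z g" if g: "g\<in>G" for g
  proof -
    have "redq q (\<lambda>g. Rep_mhat (F g)) g = level q (F g)" by (simp add: redq_def Rep_level)
    also have "\<dots> = level q (iota (z g))"
      using level_eq_iff[OF q_pos, of "iota (z g) - nscale q (c g)" "iota (z g)"] by (simp add: F_def divisible_minus_iff divisible_nscale)
    also have "\<dots> = z g" using cocycle1_MqD(1)[OF z] g q_pos by simp
    finally show ?thesis .
  qed
  then have "cohomologous1 G (Mq q) z (redq q (\<lambda>g. Rep_mhat (F g)))"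
    using cocycle1_MqD(1)[OF z] by (intro cohomologous1_Mq_eqI) auto
  then show ?thesis using fcoc by blast
qed

lemma lift_imp_beta_coboundary:
  assumes z: "cocycle1 G (Mq q) z" and f: "cocycle1 G Mhat f" and c: "cohomologous1 G (Mq q) z (redq q f)"
  shows "coboundary2 G Mhat (beta q z)"
proof -
  have fc: "\<forall>g\<in>G. f g \<in> Mhat_car" and fe: "\<forall>g\<in>G. \<forall>h\<in>G. Abs_mhat (f (g**h)) = Abs_mhat (f g) + gact g (Abs_mhat (f h))"
    using f by (auto simp: cocycle1_Mhat_iff)
  have r: "redq q f g = level q (Abs_mhat (f g))" if "g\<in>G" for g
    using fc that by (simp add: redq_def Abs_Rep_level)
  have red: "\<forall>g\<in>G. vmod (redq q f g) (int q) = redq q f g" using r q_pos by simp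
  obtain a where a: "\<forall>g\<in>G. divisible q (iota (z g) - iota (redq q f g) - (gact g a - a))"
    using c cohomologous1_Mq_iff[OF cocycle1_MqD(1)[OF z] red] by blast
  have a2: "\<forall>g\<in>G. divisible q (iota (z g) - Abs_mhat (f g) - (gact g a - a))"
  proof
    fix g assume g: "g\<in>G"
    have e: "iota (z g) - Abs_mhat (f g) - (gact g a - a) = (iota (z g) - iota (redq q f g) - (gact g a - a))
       + (iota (level q (Abs_mhat (f g))) - Abs_mhat (f g))" using r g by simp
    have "divisible q ((iota (z g) - iota (redq q f g) - (gact g a - a)) + (iota (level q (Abs_mhat (f g))) - Abs_mhat (f g)))"
      using a g by (intro divisible_add divisible_iota_level[OF q_pos]) auto
    then show "divisible q (iota (z g) - Abs_mhat (f g) - (gact g a - a))" by (simp only: e)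
  qed
  obtain w where w: "\<forall>g\<in>G. iota (z g) - Abs_mhat (f g) - (gact g a - a) = nscale q (w g)" using divisible_choice[OF a2] by blast
  have B': "\<forall>g\<in>G. \<forall>h\<in>G. nscale q 0 = cobound (\<lambda>k. Abs_mhat (f k)) g h" using fe by (simp add: cobound_def)
  have "\<forall>g\<in>G. \<forall>h\<in>G. Beta z g h - 0 = cobound w g h" by (rule divided_cobound_diff[OF multG q_pos w nscale_Beta[OF z] B'])
  then show ?thesis
    by (subst coboundary2_Mhat_iff[OF beta_in_Mhat[OF z]]) (auto simp: Abs_beta z intro!: exI[of _ w])
qed

lemma beta_coboundary_iff: assumes z: "cocycle1 G (Mq q) z"
  shows "coboundary2 G Mhat (beta q z) \<longleftrightarrow> (\<exists>f. cocycle1 G Mhat f \<and> cohomologous1 G (Mq q) z (redq q f))"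
  using beta_coboundary_imp_lift[OF z] lift_imp_beta_coboundary[OF z] by blast

lemma beta_surjective: assumes e: "cocycle2 G Mhat \<eta>"
  shows "\<exists>z. cocycle1 G (Mq q) z \<and> cohomologous2 G Mhat \<eta> (beta q z)"
proof -
  have ec: "\<forall>g\<in>G. \<forall>h\<in>G. \<eta> g h \<in> Mhat_car"
    and ee: "\<forall>g\<in>G. \<forall>h\<in>G. \<forall>k\<in>G. gact g (Abs_mhat (\<eta> h k)) + Abs_mhat (\<eta> g (h**k)) = Abs_mhat (\<eta> (g**h) k) + Abs_mhat (\<eta> g h)"
    using e by (auto simp: cocycle2_Mhat_iff)
  obtain c where c: "\<forall>g\<in>G. \<forall>h\<in>G. nscale q (Abs_mhat (\<eta> g h)) = cobound c g h"
    using scaled_cocycle_is_cobound[OF expo ee] by blast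
  define z where "z g = level q (c g)" for g
  have dd: "divisible q (c k - iota (z k))" for k
    using divisible_iota_level[OF q_pos, of "c k"] divisible_minus_iff[of q "iota (z k) - c k"] by (simp add: z_def)
  have z: "cocycle1 G (Mq q) z" unfolding cocycle1_Mq_iff
  proof (intro conjI ballI)
    fix g show "vmod (z g) (int q) = z g" using q_pos by (simp add: z_def)
  next
    fix g h assume g: "g\<in>G" and h: "h\<in>G"
    show "divisible q (cobound (\<lambda>k. iota (z k)) g h)"
    proof (rule divisible_cobound_cong[of g h q _ c])
      show "divisible q (iota (z k) - c k)" for k by (simp add: z_def divisible_iota_level[OF q_pos])
      show "divisible q (cobound c g h)" using c g h unfolding divisible_def by (intro exI[of _ "Abs_mhat (\<eta> g h)"]) simp
    qed
  qed
  obtain w where w: "\<forall>g\<in>G. c g - iota (z g) - (gact g 0 - 0) = nscale q (w g)"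
    using divisible_choice[of G q "\<lambda>g. c g - iota (z g) - (gact g 0 - 0)"] dd by auto
  have "\<forall>g\<in>G. \<forall>h\<in>G. Abs_mhat (\<eta> g h) - Beta z g h = cobound w g h" by (rule divided_cobound_diff[OF multG q_pos w c nscale_Beta[OF z]])
  then have "cohomologous2 G Mhat \<eta> (beta q z)"
    by (subst cohomologous2_Mhat_iff[OF ec beta_in_Mhat[OF z]]) (auto simp: Abs_beta z intro!: exI[of _ w])
  then show ?thesis using z by blast
qed

end

section \<open>The action of the normalizer\<close>

locale normalizer_elem = cohom_setting G q for G :: "(int^'d::finite^'d) set" and q +
  fixes \<phi> :: "(nat \<Rightarrow> int^'d) \<Rightarrow> (nat \<Rightarrow> int^'d)"
  assumes phiN: "\<phi> \<in> NAut G"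
begin

lemma phi_aut: "\<phi> \<in> AutMhat" using phiN unfolding NAut_def by blast
lemma phi_add: "x \<in> Mhat_car \<Longrightarrow> y \<in> Mhat_car \<Longrightarrow> \<phi> (hadd x y) = hadd (\<phi> x) (\<phi> y)"
  using phi_aut unfolding AutMhat_def by blast
lemma phi_bij: "bij_betw \<phi> Mhat_car Mhat_car" using phi_aut unfolding AutMhat_def by blast
lemma phi_in: "x \<in> Mhat_car \<Longrightarrow> \<phi> x \<in> Mhat_car" by (rule bij_betw_apply[OF phi_bij])
lemma phi_inj: "x \<in> Mhat_car \<Longrightarrow> y \<in> Mhat_car \<Longrightarrow> \<phi> x = \<phi> y \<Longrightarrow> x = y"
  using phi_bij by (auto simp: bij_betw_def inj_on_def)

definition Phi :: "'d mhat \<Rightarrow> 'd mhat" where "Phi x = Abs_mhat (\<phi> (Rep_mhat x))"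

lemma Rep_Phi: "Rep_mhat (Phi x) = \<phi> (Rep_mhat x)"
  by (simp add: Phi_def phi_in)
lemma Phi_add[simp]: "Phi (x + y) = Phi x + Phi y"
  by (simp add: Phi_def plus_mhat.rep_eq phi_add Abs_hadd phi_in)
lemma Phi_zero[simp]: "Phi 0 = 0"
proof -
  have "Phi 0 + Phi 0 = Phi 0 + 0" by (metis Phi_add add_0_right)
  then show ?thesis by simp
qed
lemma Phi_minus[simp]: "Phi (- x) = - Phi x"
proof -
  have "Phi (- x) + Phi x = 0" by (metis Phi_add Phi_zero left_minus)
  then show ?thesis by (simp add: eq_neg_iff_add_eq_0)
qed
lemma Phi_diff[simp]: "Phi (x - y) = Phi x - Phi y"
  by (simp only: diff_conv_add_uminus Phi_add Phi_minus)
lemma Phi_nscale[simp]: "Phi (nscale k x) = nscale k (Phi x)"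
  by (induction k) (simp_all add: nscale_Suc)
lemma Phi_level: "level q x = level q y \<Longrightarrow> level q (Phi x) = level q (Phi y)"
proof -
  assume "level q x = level q y"
  then obtain w where "x - y = nscale q w" using level_eq_iff[OF q_pos] divisible_def by blast
  then have "Phi x - Phi y = nscale q (Phi w)" by (metis Phi_diff Phi_nscale)
  then show ?thesis using level_eq_iff[OF q_pos] divisible_def by blast
qed

lemma conjG_ex1: "g \<in> G \<Longrightarrow> \<exists>!g'. g' \<in> G \<and> (\<forall>x\<in>Mhat_car. \<phi> (hact g' x) = hact g (\<phi> x))"
proof -
  assume g: "g \<in> G"
  obtain g' where g': "g' \<in> G" "\<forall>x\<in>Mhat_car. \<phi> (hact g' x) = hact g (\<phi> x)"
    using phiN g by (auto simp: NAut_def)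
  moreover have "g2 = g'" if "g2 \<in> G" "\<forall>x\<in>Mhat_car. \<phi> (hact g2 x) = hact g (\<phi> x)" for g2
  proof (rule matrix_eq_if_vmod_eq, intro allI impI)
    fix v :: "int^'d" and n :: nat assume n: "0 < n"
    have "\<phi> (hact g2 (hiota v)) = hact g (\<phi> (hiota v))" using that(2) hiota_in by blast
    moreover have "\<phi> (hact g' (hiota v)) = hact g (\<phi> (hiota v))" using g'(2) hiota_in by blast
    ultimately have "\<phi> (hact g2 (hiota v)) = \<phi> (hact g' (hiota v))" by simp
    then have "hact g2 (hiota v) = hact g' (hiota v)" by (rule phi_inj[OF hact_in[OF hiota_in] hact_in[OF hiota_in]])
    then have "hact g2 (hiota v) n = hact g' (hiota v) n" by simp
    then show "vmod (g2 *v v) (int n) = vmod (g' *v v) (int n)" using n by simp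
  qed
  ultimately show ?thesis by blast
qed

lemma conjG_in: "g \<in> G \<Longrightarrow> conjG G \<phi> g \<in> G"
  using theI'[OF conjG_ex1] unfolding conjG_def by blast

lemma conjG_hact: "g \<in> G \<Longrightarrow> \<forall>x\<in>Mhat_car. \<phi> (hact (conjG G \<phi> g) x) = hact g (\<phi> x)"
  using theI'[OF conjG_ex1] unfolding conjG_def by blast

lemma conjG_unique: "g \<in> G \<Longrightarrow> g' \<in> G \<Longrightarrow> \<forall>x\<in>Mhat_car. \<phi> (hact g' x) = hact g (\<phi> x) \<Longrightarrow> conjG G \<phi> g = g'"
  unfolding conjG_def using conjG_ex1 by (intro the1_equality) auto

lemma Phi_gact: "g \<in> G \<Longrightarrow> Phi (gact (conjG G \<phi> g) x) = gact g (Phi x)"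
  unfolding Phi_def using conjG_hact[of g]
  by (simp add: gact.rep_eq Abs_hact phi_in)

lemma conjG_mult: assumes g: "g\<in>G" and h: "h\<in>G"
  shows "conjG G \<phi> (g ** h) = conjG G \<phi> g ** conjG G \<phi> h"
proof (rule conjG_unique)
  show "g ** h \<in> G" "conjG G \<phi> g ** conjG G \<phi> h \<in> G" using g h conjG_in mult_closed by auto
  show "\<forall>x\<in>Mhat_car. \<phi> (hact (conjG G \<phi> g ** conjG G \<phi> h) x) = hact (g ** h) (\<phi> x)"
  proof
    fix x :: "nat \<Rightarrow> int^'d" assume x: "x \<in> Mhat_car"
    have e: "hact (A ** B) y = hact A (hact B y)" if "y \<in> Mhat_car" for A B y
    proof -
      have "Abs_mhat (hact (A ** B) y) = Abs_mhat (hact A (hact B y))"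
        using that by (simp add: Abs_hact hact_in)
      then show ?thesis using that by (simp add: Abs_mhat_eq_iff hact_in)
    qed
    show "\<phi> (hact (conjG G \<phi> g ** conjG G \<phi> h) x) = hact (g ** h) (\<phi> x)"
      using x conjG_hact[OF g] conjG_hact[OF h] by (simp add: e hact_in phi_in)
  qed
qed


lemma redq_equivariant: assumes f: "cocycle1 G Mhat f"
  shows "cohomologous1 G (Mq q) (redq q (act1hat G \<phi> f)) (act1q q G \<phi> (redq q f))"
proof (rule cohomologous1_Mq_eqI)
  have fc: "\<forall>g\<in>G. f g \<in> Mhat_car" using f by (auto simp: cocycle1_Mhat_iff)
  have fr: "f g = Rep_mhat (Abs_mhat (f g))" if "g\<in>G" for g using fc that by simp
  have L: "redq q (act1hat G \<phi> f) g = level q (Phi (Abs_mhat (f (conjG G \<phi> g))))" if g: "g\<in>G" for g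
  proof -
    have e: "f (conjG G \<phi> g) = Rep_mhat (Abs_mhat (f (conjG G \<phi> g)))" by (rule fr[OF conjG_in[OF g]])
    show ?thesis unfolding redq_def act1hat_def by (subst e) (simp only: Rep_Phi[symmetric] Rep_level)
  qed
  show "\<forall>g\<in>G. vmod (redq q (act1hat G \<phi> f) g) (int q) = redq q (act1hat G \<phi> f) g"
    using L q_pos by simp
  show "\<forall>g\<in>G. act1q q G \<phi> (redq q f) g = redq q (act1hat G \<phi> f) g"
  proof
    fix g assume g: "g\<in>G"
    let ?y = "Abs_mhat (f (conjG G \<phi> g))"
    have e: "f (conjG G \<phi> g) = Rep_mhat ?y" by (rule fr[OF conjG_in[OF g]])
    have "act1q q G \<phi> (redq q f) g = level q (Phi (iota (level q ?y)))"
      unfolding act1q_def phiq_def redq_def by (subst e) (simp only: Rep_hiota Rep_Phi[symmetric] Rep_level)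
    also have "\<dots> = level q (Phi ?y)" by (rule Phi_level) (use q_pos in simp)
    finally show "act1q q G \<phi> (redq q f) g = redq q (act1hat G \<phi> f) g" using L[OF g] by simp
  qed
qed

lemma beta_equivariant: assumes z: "cocycle1 G (Mq q) z"
  shows "cohomologous2 G Mhat (beta q (act1q q G \<phi> z)) (act2hat G \<phi> (beta q z))"
proof -
  define cg where "cg g = conjG G \<phi> g" for g
  have cgG: "g\<in>G \<Longrightarrow> cg g \<in> G" for g using conjG_in by (simp add: cg_def)
  define Z where "Z k = iota (z k)" for k
  define z1 where "z1 = act1q q G \<phi> z"
  have z1e: "z1 g = level q (Phi (Z (cg g)))" for g
    by (simp add: z1_def act1q_def phiq_def Rep_hiota Rep_Phi[symmetric] Rep_level cg_def Z_def)
  define c' where "c' g = Phi (Z (cg g))" for g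
  define B' where "B' g h = Phi (Beta z (cg g) (cg h))" for g h
  have td: "cobound c' g h = Phi (cobound Z (cg g) (cg h))" if g: "g\<in>G" and h: "h\<in>G" for g h
    using g h by (simp add: cobound_def c'_def cg_def conjG_mult Phi_gact[symmetric])
  have hsB': "\<forall>g\<in>G. \<forall>h\<in>G. nscale q (B' g h) = cobound c' g h"
    using nscale_Beta[OF z] cgG by (simp add: B'_def td Z_def[abs_def] Phi_nscale[symmetric] del: Phi_nscale)
  have dd: "divisible q (iota (z1 k) - c' k)" for k
    by (simp add: z1e c'_def divisible_iota_level[OF q_pos])
  have z1c: "cocycle1 G (Mq q) z1" unfolding cocycle1_Mq_iff
  proof (intro conjI ballI)
    fix g show "vmod (z1 g) (int q) = z1 g" using q_pos by (simp add: z1e)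
  next
    fix g h assume g: "g\<in>G" and h: "h\<in>G"
    show "divisible q (cobound (\<lambda>k. iota (z1 k)) g h)"
    proof (rule divisible_cobound_cong[of g h q _ c'])
      show "divisible q (iota (z1 k) - c' k)" for k by (rule dd)
      show "divisible q (cobound c' g h)" using hsB' g h unfolding divisible_def by (metis)
    qed
  qed
  obtain w where w: "\<forall>g\<in>G. iota (z1 g) - c' g - (gact g 0 - 0) = nscale q (w g)"
    using divisible_choice[of G q "\<lambda>g. iota (z1 g) - c' g - (gact g 0 - 0)"] dd by auto
  have L: "\<forall>g\<in>G. \<forall>h\<in>G. Beta z1 g h - B' g h = cobound w g h" by (rule divided_cobound_diff[OF multG q_pos w nscale_Beta[OF z1c] hsB'])
  have a2: "act2hat G \<phi> (beta q z) g h = Rep_mhat (B' g h)" if g: "g\<in>G" and h: "h\<in>G" for g h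
    using Beta_spec(2)[OF cocycle1_MqD(2)[OF z, rule_format, OF cgG[OF g] cgG[OF h]]]
    by (simp add: act2hat_def B'_def cg_def Rep_Phi[symmetric])
  have inn: "\<forall>g\<in>G. \<forall>h\<in>G. act2hat G \<phi> (beta q z) g h \<in> Mhat_car" using a2 by simp
  show ?thesis unfolding z1_def[symmetric]
    by (subst cohomologous2_Mhat_iff[OF beta_in_Mhat[OF z1c] inn])
       (use L in \<open>auto simp: Abs_beta z1c a2 Rep_mhat_inverse intro!: exI[of _ w]\<close>)
qed

lemma conjG_eq_self: assumes triv: "\<forall>x\<in>Mhat_car. \<phi> x q = x q" and g: "g \<in> G"
  shows "conjG G \<phi> g = g"
proof (rule congruent_mod_eq[OF q3 g conjG_in[OF g]], intro allI)
  fix v :: "int^'d"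
  have levP: "level q (Phi x) = level q x" for x
    using triv by (simp add: Rep_level[symmetric] Rep_Phi)
  have "vmod (conjG G \<phi> g *v v) (int q) = level q (Phi (gact (conjG G \<phi> g) (iota v)))"
    using q_pos by (simp add: levP)
  also have "\<dots> = vmod (g *v v) (int q)" using q_pos by (simp add: Phi_gact[OF g] levP)
  finally show "vmod (conjG G \<phi> g *v v) (int q) = vmod (g *v v) (int q)" .
qed

lemma kernel_acts_trivially: assumes triv: "\<forall>x\<in>Mhat_car. \<phi> x q = x q" and e: "cocycle2 G Mhat \<eta>"
  shows "cohomologous2 G Mhat (act2hat G \<phi> \<eta>) \<eta>"
proof -
  have levP: "level q (Phi x) = level q x" for x
    using triv by (simp add: Rep_level[symmetric] Rep_Phi)
  note cg = conjG_eq_self[OF triv]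
  have PA: "Phi (gact g x) = gact g (Phi x)" if "g\<in>G" for g x
    using Phi_gact[OF that] cg[OF that] by simp
  have Ptd: "Phi (cobound c g h) = cobound (\<lambda>k. Phi (c k)) g h" if "g\<in>G" for c g h
    using PA[OF that] by (simp add: cobound_def)
  have ec: "\<forall>g\<in>G. \<forall>h\<in>G. \<eta> g h \<in> Mhat_car" using e by (simp add: cocycle2_Mhat_iff)
  obtain z where z: "cocycle1 G (Mq q) z" and ch: "cohomologous2 G Mhat \<eta> (beta q z)" using beta_surjective[OF e] by blast
  obtain w where w: "\<forall>g\<in>G. \<forall>h\<in>G. Abs_mhat (\<eta> g h) - Beta z g h = cobound w g h"
    using ch cohomologous2_Mhat_iff[OF ec beta_in_Mhat[OF z]] Abs_beta[OF z] by auto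
  define Z where "Z k = iota (z k)" for k
  have "\<forall>k\<in>G. divisible q (Phi (Z k) - Z k)" using level_eq_iff[OF q_pos] levP by blast
  then have "\<exists>u. \<forall>k\<in>G. Phi (Z k) - Z k = nscale q (u k)" by (rule divisible_choice)
  then obtain u where u: "\<forall>k\<in>G. Phi (Z k) - Z k = nscale q (u k)" by blast
  have PB: "Phi (Beta z g h) - Beta z g h = cobound u g h" if g: "g\<in>G" and h: "h\<in>G" for g h
  proof (rule nscale_inj[OF q_pos])
    have "nscale q (Phi (Beta z g h) - Beta z g h) = Phi (cobound Z g h) - cobound Z g h"
      using nscale_Beta[OF z] g h by (simp add: Z_def[abs_def] Phi_nscale[symmetric] del: Phi_nscale)
    also have "\<dots> = cobound (\<lambda>k. Phi (Z k) - Z k) g h" by (simp add: Ptd[OF g] cobound_diff)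
    also have "\<dots> = cobound (\<lambda>k. nscale q (u k)) g h" using u g h mult_closed by (simp add: cobound_def)
    finally show "nscale q (Phi (Beta z g h) - Beta z g h) = nscale q (cobound u g h)" by (simp add: nscale_cobound)
  qed
  have act2: "act2hat G \<phi> \<eta> g h = Rep_mhat (Phi (Abs_mhat (\<eta> g h)))" if g: "g\<in>G" and h: "h\<in>G" for g h
    using cg[OF g] cg[OF h] ec g h by (simp add: act2hat_def Rep_Phi)
  have inn: "\<forall>g\<in>G. \<forall>h\<in>G. act2hat G \<phi> \<eta> g h \<in> Mhat_car" using act2 by simp
  have "Phi (Abs_mhat (\<eta> g h)) - Abs_mhat (\<eta> g h) = cobound (\<lambda>k. u k + (Phi (w k) - w k)) g h"
    if g: "g\<in>G" and h: "h\<in>G" for g h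
  proof -
    have E: "Abs_mhat (\<eta> g h) = Beta z g h + cobound w g h" using w g h by (simp add: algebra_simps)
    have "Phi (Abs_mhat (\<eta> g h)) - Abs_mhat (\<eta> g h) = (Phi (Beta z g h) - Beta z g h) + (Phi (cobound w g h) - cobound w g h)"
      by (simp add: E algebra_simps)
    also have "\<dots> = cobound u g h + cobound (\<lambda>k. Phi (w k) - w k) g h"
      by (simp add: PB[OF g h] Ptd[OF g] cobound_diff)
    finally show ?thesis by (simp add: cobound_add)
  qed
  then show ?thesis
    by (subst cohomologous2_Mhat_iff[OF inn ec]) (auto simp: act2 Rep_mhat_inverse intro!: exI[of _ "\<lambda>k. u k + (Phi (w k) - w k)"])
qed

end

theorem mainTheorem8:
  fixes G :: "(int^'d^'d) set" and q :: nat
  assumes finG: "finite G"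
    and oneG: "mat 1 \<in> G"
    and multG: "\<forall>g\<in>G. \<forall>h\<in>G. g ** h \<in> G"
    and invG: "\<forall>g\<in>G. \<exists>h\<in>G. g ** h = mat 1"
    and q3: "q \<ge> 3"
    and expo: "\<forall>f. cocycle2 G (Mint :: (int^'d, int^'d^'d) gmodule) f
                   \<longrightarrow> coboundary2 G (Mint :: (int^'d, int^'d^'d) gmodule) (\<lambda>g h. int q *s f g h)"
  shows
    \<comment> \<open>reduction H^1(G,Mhat) -> H^1(G,M/qM): well defined homomorphism\<close>
    "(\<forall>f. cocycle1 G Mhat f \<longrightarrow> cocycle1 G (Mq q) (redq q f))
   \<and> (\<forall>f f'. cocycle1 G Mhat f \<longrightarrow> cocycle1 G Mhat f' \<longrightarrow> cohomologous1 G Mhat f f'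
        \<longrightarrow> cohomologous1 G (Mq q) (redq q f) (redq q f'))
   \<and> (\<forall>f f'. cocycle1 G Mhat f \<longrightarrow> cocycle1 G Mhat f'
        \<longrightarrow> cohomologous1 G (Mq q) (redq q (\<lambda>g. hadd (f g) (f' g)))
                                  (\<lambda>g. madd (Mq q) (redq q f g) (redq q f' g)))
    \<comment> \<open>connecting map H^1(G,M/qM) -> H^2(G,Mhat): well defined homomorphism\<close>
   \<and> (\<forall>z. cocycle1 G (Mq q) z \<longrightarrow> cocycle2 G Mhat (beta q z))
   \<and> (\<forall>z z'. cocycle1 G (Mq q) z \<longrightarrow> cocycle1 G (Mq q) z' \<longrightarrow> cohomologous1 G (Mq q) z z'
        \<longrightarrow> cohomologous2 G Mhat (beta q z) (beta q z'))
   \<and> (\<forall>z z'. cocycle1 G (Mq q) z \<longrightarrow> cocycle1 G (Mq q) z'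
        \<longrightarrow> cohomologous2 G Mhat (beta q (\<lambda>g. madd (Mq q) (z g) (z' g)))
                                  (\<lambda>g h. hadd (beta q z g h) (beta q z' g h)))
    \<comment> \<open>exactness at H^1(G,M/qM)\<close>
   \<and> (\<forall>z. cocycle1 G (Mq q) z \<longrightarrow>
        (coboundary2 G Mhat (beta q z)
          \<longleftrightarrow> (\<exists>f. cocycle1 G Mhat f \<and> cohomologous1 G (Mq q) z (redq q f))))
    \<comment> \<open>exactness at H^2(G,Mhat): the connecting map is onto\<close>
   \<and> (\<forall>\<eta>. cocycle2 G Mhat \<eta> \<longrightarrow>
        (\<exists>z. cocycle1 G (Mq q) z \<and> cohomologous2 G Mhat \<eta> (beta q z)))
    \<comment> \<open>compatibility with the actions of the normalizer\<close>
   \<and> (\<forall>\<phi>\<in>NAut G. \<forall>f. cocycle1 G Mhat f \<longrightarrow>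
        cohomologous1 G (Mq q) (redq q (act1hat G \<phi> f)) (act1q q G \<phi> (redq q f)))
   \<and> (\<forall>\<phi>\<in>NAut G. \<forall>z. cocycle1 G (Mq q) z \<longrightarrow>
        cohomologous2 G Mhat (beta q (act1q q G \<phi> z)) (act2hat G \<phi> (beta q z)))
    \<comment> \<open>consequence: N \<inter> ker(Aut(Mhat) -> Aut(M/qM)) acts trivially on H^2(G,Mhat)\<close>
   \<and> (\<forall>\<phi>\<in>NAut G. (\<forall>x\<in>Mhat_car. \<phi> x q = x q) \<longrightarrow>
        (\<forall>\<eta>. cocycle2 G Mhat \<eta> \<longrightarrow> cohomologous2 G Mhat (act2hat G \<phi> \<eta>) \<eta>))"
proof -
  interpret cohom_setting G q
    by unfold_locales (use finG oneG multG invG q3 expo in auto)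
  have \<phi>: "normalizer_elem G q \<phi>" if "\<phi> \<in> NAut G" for \<phi>
    by (rule normalizer_elem.intro[OF cohom_setting_axioms normalizer_elem_axioms.intro[OF that]])
  show ?thesis
    using redq_cocycle redq_cohomologous redq_additive
      beta_cocycle beta_cohomologous beta_additive beta_coboundary_iff beta_surjective
      normalizer_elem.redq_equivariant[OF \<phi>] normalizer_elem.beta_equivariant[OF \<phi>]
      normalizer_elem.kernel_acts_trivially[OF \<phi>]
    by blast
qed
end
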